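(* Let $U\in\mathcal{P}(n,d)$ and let $L^{tr}=\mathbf{e}^d\mathbf{n}^{n-d}\in\mathcal{P}(n,d)$. Let $\Lambda=\Lambda_{M[U,L^{tr}]}$. Then $\mathrm{st}_{L^{tr}}(C)=\Lambda(\mathcal{E}(C))$ for all $C\in\mathcal{P}[U,L^{tr}]$. In particular, \[ \mathcal{S}_{\mathsf{lex}}(M[U,L^{tr}])=\{\mathrm{st}_{L^{tr}}(C) : C\in\mathcal{P}[U,L^{tr}]\}. \]
   Context: $\mathcal{P}(n,d)$ is the set of words $C=C_1\cdots C_n$ in letters $\mathbf{e}$ (east step $(1,0)$) and $\mathbf{n}$ (north step $(0,1)$) with exactly $d$ letters $\mathbf{e}$ (lattice paths from $(0,0)$ to $(d,n-d)$). $\mathcal{E}(C)=\{i\in[n]:C_i=\mathbf{e}\}$. For $U,L\in\mathcal{P}(n,d)$, $U$ is weakly above $L$ if every prefix $L_1\cdots L_k$ contains at least as many $\mathbf{e}$'s as $U_1\cdots U_k$. $\mathcal{P}[U,L]$ is the set of $C\in\mathcal{P}(n,d)$ weakly below $U$ and weakly above $L$, and the lattice path matroid $M[U,L]$ is the matroid on $[n]$ with set of bases $\{\mathcal{E}(C):C\in\mathcal{P}[U,L]\}$. Statistic: for $C\in\mathcal{P}(n,d)$ scan positions from left to right and mark position $i$ with $C_i=\mathbf{e}$ if the number of $j<i$ with $C_j=\mathbf{n}$ equals the number of $j<i$ with $C_j=\mathbf{e}$ that are unmarked. Then $\mathrm{st}_{L^{tr}}(C)\subseteq\mathcal{E}(C)$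 is the set of unmarked positions $i$ with $C_i=\mathbf{e}$. For a matroid $M$ on finite $E\subset\mathbb{N}$ with bases $\mathcal{B}(M)$: $\mathcal{S}_{\mathsf{lex}}(M)=\{\tau\subseteq E:\prod_{i\in\tau}x_i\notin\mathrm{in}(I(V_M))\}$, where $V_M=\{\mathbf{e}_B:B\in\mathcal{B}(M)\}$ (characteristic vectors), $I(V_M)\subseteq\mathbb{R}[x_e:e\in E]$ is its vanishing ideal and the initial ideal is taken for the lexicographic order with $x_e\succ x_f$ for $e<f$ ($\mathcal{S}_{\mathsf{lex}}=\{\emptyset\}$ if $E=\emptyset$). There is a unique family of bijections $\Lambda_M:\mathcal{B}(M)\to\mathcal{S}_{\mathsf{lex}}(M)$, indexed by all matroids $M$ with ground set a finite subset of $\mathbb{N}$, such that for $M$ with nonempty ground set, $m$ its largest element, and $B\in\mathcal{B}(M)$: $\Lambda_M(B)\subseteq B$; $\Lambda_M(B)=\Lambda_{M\backslash m}(B)$ if $m\notin B$; $\Lambda_M(B)\setminus\{m\}=\Lambda_{M/m}(B\setminus\{m\})$ if $m\in B$. $\Lambda_{M[U,L]}$ refers to this family. *)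

theory Defs
  imports Complex_Main "HOL-Library.Poly_Mapping"
begin

datatype step = StE | StN

definition paths :: "nat \<Rightarrow> nat \<Rightarrow> step list set" where
  "paths n d = {C. length C = n \<and> length (filter (\<lambda>s. s = StE) C) = d}"

(* positions are 1-based: position i corresponds to C ! (i - 1) *)
definition Epos :: "step list \<Rightarrow> nat set" where
  "Epos C = {i. 1 \<le> i \<and> i \<le> length C \<and> C ! (i - 1) = StE}"

definition num_e :: "step list \<Rightarrow> nat" where
  "num_e C = length (filter (\<lambda>s. s = StE) C)"

definition weakly_above :: "step list \<Rightarrow> step list \<Rightarrow> bool" where
  "weakly_above U L \<longleftrightarrow> (\<forall>k \<le> length L. num_e (take k U) \<le> num_e (take k L))"

definition paths_between :: "nat \<Rightarrow> nat \<Rightarrow> step list \<Rightarrow> step list \<Rightarrow> step list set" where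
  "paths_between n d U L = {C \<in> paths n d. weakly_above U C \<and> weakly_above C L}"

definition Ltr :: "nat \<Rightarrow> nat \<Rightarrow> step list" where
  "Ltr n d = replicate d StE @ replicate (n - d) StN"

(* The statistic st_{L^tr}: scan left to right; a = number of n's seen so far,
   b = number of unmarked e's seen so far; an e at position i is marked iff a = b. *)
fun st_aux :: "step list \<Rightarrow> nat \<Rightarrow> nat \<Rightarrow> nat \<Rightarrow> nat set" where
  "st_aux [] i a b = {}"
| "st_aux (StN # cs) i a b = st_aux cs (Suc i) (Suc a) b"
| "st_aux (StE # cs) i a b =
     (if a = b then st_aux cs (Suc i) a b else insert i (st_aux cs (Suc i) a (Suc b)))"

definition st_Ltr :: "step list \<Rightarrow> nat set" where
  "st_Ltr C = st_aux C 1 0 0"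

definition matroid :: "nat set \<Rightarrow> nat set set \<Rightarrow> bool" where
  "matroid E Bs \<longleftrightarrow> finite E \<and> Bs \<noteq> {} \<and> (\<forall>B\<in>Bs. B \<subseteq> E) \<and>
     (\<forall>B1\<in>Bs. \<forall>B2\<in>Bs. \<forall>x\<in>B1 - B2. \<exists>y\<in>B2 - B1. insert y (B1 - {x}) \<in> Bs)"

definition del_bases :: "nat set set \<Rightarrow> nat \<Rightarrow> nat set set" where
  "del_bases Bs m = (if \<exists>B\<in>Bs. m \<notin> B then {B\<in>Bs. m \<notin> B} else (\<lambda>B. B - {m}) ` Bs)"

definition con_bases :: "nat set set \<Rightarrow> nat \<Rightarrow> nat set set" where
  "con_bases Bs m = (if \<exists>B\<in>Bs. m \<in> B then (\<lambda>B. B - {m}) ` {B\<in>Bs. m \<in> B} else Bs)"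

definition lattice_path_matroid_bases ::
  "nat \<Rightarrow> nat \<Rightarrow> step list \<Rightarrow> step list \<Rightarrow> nat set set" where
  "lattice_path_matroid_bases n d U L = Epos ` paths_between n d U L"

type_synonym mon = "nat \<Rightarrow>\<^sub>0 nat"
type_synonym rpoly = "mon \<Rightarrow>\<^sub>0 real"

definition poly_in :: "nat set \<Rightarrow> rpoly set" where
  "poly_in E = {f. \<forall>\<alpha>\<in>Poly_Mapping.keys f. Poly_Mapping.keys \<alpha> \<subseteq> E}"

definition peval :: "rpoly \<Rightarrow> (nat \<Rightarrow> real) \<Rightarrow> real" where
  "peval f v = (\<Sum>\<alpha>\<in>Poly_Mapping.keys f. Poly_Mapping.lookup f \<alpha> * (\<Prod>i\<in>Poly_Mapping.keys \<alpha>. v i ^ Poly_Mapping.lookup \<alpha> i))"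

definition char_vec :: "nat set \<Rightarrow> nat \<Rightarrow> real" where
  "char_vec B = (\<lambda>i. if i \<in> B then 1 else 0)"

definition vanishing_ideal :: "nat set \<Rightarrow> (nat \<Rightarrow> real) set \<Rightarrow> rpoly set" where
  "vanishing_ideal E V = {f \<in> poly_in E. \<forall>v\<in>V. peval f v = 0}"

(* lexicographic order with x_e > x_f for e < f: beta <lex alpha iff at the smallest
   variable where the exponents differ, alpha has the larger exponent *)
definition lex_less :: "mon \<Rightarrow> mon \<Rightarrow> bool" where
  "lex_less \<beta> \<alpha> \<longleftrightarrow> (\<exists>i. (\<forall>j<i. Poly_Mapping.lookup \<beta> j = Poly_Mapping.lookup \<alpha> j) \<and> Poly_Mapping.lookup \<beta> i < Poly_Mapping.lookup \<alpha> i)"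

definition lead_mon :: "rpoly \<Rightarrow> mon" where
  "lead_mon f = (THE \<alpha>. \<alpha> \<in> Poly_Mapping.keys f \<and> (\<forall>\<beta>\<in>Poly_Mapping.keys f. \<beta> = \<alpha> \<or> lex_less \<beta> \<alpha>))"

definition monom :: "mon \<Rightarrow> rpoly" where
  "monom \<alpha> = Poly_Mapping.single \<alpha> 1"

inductive_set ideal_gen :: "nat set \<Rightarrow> rpoly set \<Rightarrow> rpoly set" for E G where
  zero: "0 \<in> ideal_gen E G"
| add: "g \<in> G \<Longrightarrow> h \<in> poly_in E \<Longrightarrow> p \<in> ideal_gen E G \<Longrightarrow> h * g + p \<in> ideal_gen E G"

definition init_ideal_lex :: "nat set \<Rightarrow> rpoly set \<Rightarrow> rpoly set" where
  "init_ideal_lex E I = ideal_gen E {monom (lead_mon f) | f. f \<in> I \<and> f \<noteq> 0}"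

definition sqfree_mon :: "nat set \<Rightarrow> mon" where
  "sqfree_mon \<tau> = (\<Sum>i\<in>\<tau>. Poly_Mapping.single i 1)"

definition S_lex :: "nat set \<Rightarrow> nat set set \<Rightarrow> nat set set" where
  "S_lex E Bs = (if E = {} then {{}} else
     {\<tau>. \<tau> \<subseteq> E \<and> monom (sqfree_mon \<tau>)
            \<notin> init_ideal_lex E (vanishing_ideal E (char_vec ` Bs))})"

definition is_Lambda_family :: "(nat set \<Rightarrow> nat set set \<Rightarrow> nat set \<Rightarrow> nat set) \<Rightarrow> bool" where
  "is_Lambda_family Lam \<longleftrightarrow>
     (\<forall>E Bs. matroid E Bs \<longrightarrow>
        bij_betw (Lam E Bs) Bs (S_lex E Bs) \<and>
        (E \<noteq> {} \<longrightarrow>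
          (\<forall>B\<in>Bs. Lam E Bs B \<subseteq> B \<and>
             (Max E \<notin> B \<longrightarrow> Lam E Bs B = Lam (E - {Max E}) (del_bases Bs (Max E)) B) \<and>
             (Max E \<in> B \<longrightarrow> Lam E Bs B - {Max E} =
                Lam (E - {Max E}) (con_bases Bs (Max E)) (B - {Max E})))))"

end

theory Submission
  imports Defs
begin

(* Both sides obey one recursion in the largest element m = n of the ground set. Deleting the
   last step splits the paths into those ending with n, which give the deletion M \ m, and those
   ending with e, which give the contraction M / m. For a set of 0/1 points, writing a multilinear
   polynomial as p0 + x_m * p1 (x_m being the smallest variable) shows that the lex standard sets
   are S0, S1 and m added to S0 \<inter> S1, where S0 and S1 belong to the deletion and the
   contraction. The statistic obeys the same rule: a final e is unmarked exactly when the
   statistic of its prefix is also attained by a prefix ending with n, obtained by turning a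
   suitable n into an e. Finally, the recursion defining Lambda together with its injectivity
   forces Lambda (E C) = st C. *)

section \<open>The statistic\<close>

lemma num_e_Nil [simp]: "num_e [] = 0"
  and num_e_Cons [simp]: "num_e (x # xs) = (if x = StE then Suc (num_e xs) else num_e xs)"
  and num_e_append [simp]: "num_e (xs @ ys) = num_e xs + num_e ys"
  by (simp_all add: num_e_def)

lemma num_e_le_length: "num_e xs \<le> length xs"
  by (simp add: num_e_def)

lemma weakly_above_refl: "weakly_above xs xs"
  by (simp add: weakly_above_def)

lemma weakly_above_snoc:
  assumes "length xs = length ys"
  shows "weakly_above (xs @ [x]) (ys @ [y]) \<longleftrightarrow>
           weakly_above xs ys \<and> num_e (xs @ [x]) \<le> num_e (ys @ [y])"
proof -
  have "(\<forall>k \<le> Suc (length ys). P k) \<longleftrightarrow> (\<forall>k \<le> length ys. P k) \<and> P (Suc (length ys))" for P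
    by (auto simp: le_Suc_eq)
  then show ?thesis
    using assms by (simp add: weakly_above_def)
qed

fun scan_counts :: "step list \<Rightarrow> nat \<Rightarrow> nat \<Rightarrow> nat \<times> nat" where
  "scan_counts [] a b = (a, b)"
| "scan_counts (StN # cs) a b = scan_counts cs (Suc a) b"
| "scan_counts (StE # cs) a b = (if a = b then scan_counts cs a b else scan_counts cs a (Suc b))"

lemma st_aux_append:
  "st_aux (xs @ ys) i a b =
     st_aux xs i a b \<union> st_aux ys (i + length xs) (fst (scan_counts xs a b)) (snd (scan_counts xs a b))"
  by (induction xs a b arbitrary: i rule: scan_counts.induct) auto

lemma st_aux_subset: "st_aux cs i a b \<subseteq> {i..<i + length cs}"
proof (induction cs arbitrary: i a b)
  case (Cons x cs)
  have "st_aux cs (Suc i) a' b' \<subseteq> {i..<i + length (x # cs)}" for a' b'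
    using Cons.IH[of "Suc i" a' b'] by auto
  then show ?case
    by (cases x) auto
qed simp

lemma fst_scan_counts: "fst (scan_counts cs a b) = a + (length cs - num_e cs)"
  by (induction cs a b rule: scan_counts.induct) (auto simp: Suc_diff_le num_e_le_length)

lemma snd_scan_counts_le: "b \<le> a \<Longrightarrow> snd (scan_counts cs a b) \<le> fst (scan_counts cs a b)"
  by (induction cs a b rule: scan_counts.induct) auto

lemma finite_st_aux: "finite (st_aux cs i a b)"
  by (rule finite_subset[OF st_aux_subset]) simp

lemma card_st_aux: "card (st_aux cs i a b) + b = snd (scan_counts cs a b)"
proof (induction cs arbitrary: i a b)
  case (Cons x cs)
  show ?case
  proof (cases x)
    case StN
    then show ?thesis
      using Cons.IH[of "Suc i" "Suc a" b] by simp
  next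
    case StE
    show ?thesis
    proof (cases "a = b")
      case True
      then show ?thesis
        using StE Cons.IH[of "Suc i" a b] by simp
    next
      case False
      have "i \<notin> st_aux cs (Suc i) a (Suc b)"
        using st_aux_subset[of cs "Suc i" a "Suc b"] by auto
      then show ?thesis
        using StE False Cons.IH[of "Suc i" a "Suc b"] by (simp add: finite_st_aux)
    qed
  qed
qed simp

lemma st_Ltr_subset: "st_Ltr C \<subseteq> {1..length C}"
  using st_aux_subset[of C 1 0 0] by (auto simp: st_Ltr_def)

lemma card_st_Ltr_le: "card (st_Ltr C) \<le> length C - num_e C"
  using card_st_aux[of C 1 0 0] snd_scan_counts_le[of 0 0 C] fst_scan_counts[of C 0 0]
  by (simp add: st_Ltr_def)

text \<open>After reading \<open>C\<close>, the scan has seen \<open>length C - num_e C\<close> letters \<open>n\<close> and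
  \<open>card (st_Ltr C)\<close> unmarked letters \<open>e\<close>; a further \<open>e\<close> stays unmarked iff these differ.\<close>

definition next_e_unmarked :: "step list \<Rightarrow> bool" where
  "next_e_unmarked C \<longleftrightarrow> card (st_Ltr C) < length C - num_e C"

lemma st_Ltr_snoc_N [simp]: "st_Ltr (C @ [StN]) = st_Ltr C"
  by (simp add: st_Ltr_def st_aux_append)

lemma st_Ltr_snoc_E:
  "st_Ltr (C @ [StE]) =
     (if next_e_unmarked C then insert (Suc (length C)) (st_Ltr C) else st_Ltr C)"
proof -
  have "fst (scan_counts C 0 0) = snd (scan_counts C 0 0) \<longleftrightarrow> \<not> next_e_unmarked C"
    using card_st_aux[of C 1 0 0] card_st_Ltr_le[of C] fst_scan_counts[of C 0 0]
    by (auto simp: next_e_unmarked_def st_Ltr_def)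
  then show ?thesis
    by (auto simp: st_Ltr_def st_aux_append)
qed

lemma card_st_Ltr_snoc_E:
  "card (st_Ltr (C @ [StE])) = (if next_e_unmarked C then Suc (card (st_Ltr C)) else card (st_Ltr C))"
proof -
  have "Suc (length C) \<notin> st_Ltr C" and "finite (st_Ltr C)"
    using st_Ltr_subset[of C] finite_subset by auto
  then show ?thesis
    by (simp add: st_Ltr_snoc_E)
qed

text \<open>The \<open>n\<close> turned into an \<open>e\<close> is the last one read with both counters equal, where an
  \<open>e\<close> is marked.\<close>

lemma lower_path_with_same_st:
  assumes "next_e_unmarked C"
  shows "\<exists>C'. length C' = length C \<and> num_e C' = Suc (num_e C) \<and> weakly_above C C' \<and>
              st_Ltr C' = st_Ltr C"
  using assms
proof (induction C rule: rev_induct)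
  case Nil
  then show ?case
    by (simp add: next_e_unmarked_def)
next
  case (snoc x xs)
  show ?case
  proof (cases x)
    case StN
    show ?thesis
    proof (cases "next_e_unmarked xs")
      case True
      then obtain xs' where "length xs' = length xs" "num_e xs' = Suc (num_e xs)"
        "weakly_above xs xs'" "st_Ltr xs' = st_Ltr xs"
        using snoc.IH by blast
      then show ?thesis
        using StN by (intro exI[of _ "xs' @ [StN]"]) (simp add: weakly_above_snoc)
    next
      case False
      have "weakly_above (xs @ [StN]) (xs @ [StE])"
        by (simp add: weakly_above_snoc weakly_above_refl)
      then show ?thesis
        using StN False by (intro exI[of _ "xs @ [StE]"]) (simp add: st_Ltr_snoc_E)
    qed
  next
    case StE
    have xs: "next_e_unmarked xs"
    proof (rule ccontr)
      assume "\<not> next_e_unmarked xs"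
      then have "st_Ltr (xs @ [StE]) = st_Ltr xs"
        by (simp add: st_Ltr_snoc_E)
      then show False
        using snoc.prems StE \<open>\<not> next_e_unmarked xs\<close> by (simp add: next_e_unmarked_def)
    qed
    then have gap: "Suc (card (st_Ltr xs)) < length xs - num_e xs"
      using snoc.prems StE by (simp add: next_e_unmarked_def card_st_Ltr_snoc_E)
    obtain xs' where xs': "length xs' = length xs" "num_e xs' = Suc (num_e xs)"
      "weakly_above xs xs'" "st_Ltr xs' = st_Ltr xs"
      using snoc.IH xs by blast
    then have "next_e_unmarked xs'"
      using gap by (simp add: next_e_unmarked_def)
    then show ?thesis
      using StE xs xs' by (intro exI[of _ "xs' @ [StE]"]) (simp add: weakly_above_snoc st_Ltr_snoc_E)
  qed
qed

section \<open>Paths below an upper boundary\<close>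

definition paths_below :: "nat \<Rightarrow> nat \<Rightarrow> (nat \<Rightarrow> nat) \<Rightarrow> step list set" where
  "paths_below n d u = {C \<in> paths n d. \<forall>k\<le>n. u k \<le> num_e (take k C)}"

text \<open>The bound \<open>\<lambda>_. 1\<close> is unsatisfiable at \<open>k = 0\<close> and encodes the empty family.\<close>

definition bound_before_N :: "nat \<Rightarrow> nat \<Rightarrow> (nat \<Rightarrow> nat) \<Rightarrow> nat \<Rightarrow> nat" where
  "bound_before_N n d u = (if u (Suc n) \<le> d then u else (\<lambda>_. 1))"

definition bound_before_E :: "nat \<Rightarrow> nat \<Rightarrow> (nat \<Rightarrow> nat) \<Rightarrow> nat \<Rightarrow> nat" where
  "bound_before_E n d u = (if u (Suc n) \<le> d \<and> 0 < d then u else (\<lambda>_. 1))"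

abbreviation prefixes_N :: "nat \<Rightarrow> nat \<Rightarrow> (nat \<Rightarrow> nat) \<Rightarrow> step list set" where
  "prefixes_N n d u \<equiv> paths_below n d (bound_before_N n d u)"

abbreviation prefixes_E :: "nat \<Rightarrow> nat \<Rightarrow> (nat \<Rightarrow> nat) \<Rightarrow> step list set" where
  "prefixes_E n d u \<equiv> paths_below n (d - 1) (bound_before_E n d u)"

lemma mem_paths_below_iff:
  "C \<in> paths_below n d u \<longleftrightarrow>
     length C = n \<and> num_e C = d \<and> (\<forall>k\<le>n. u k \<le> num_e (take k C))"
  by (auto simp: paths_below_def paths_def num_e_def)

lemma paths_belowD:
  assumes "C \<in> paths_below n d u"
  shows "length C = n" "num_e C = d"
  using assms by (simp_all add: mem_paths_below_iff)

lemma snoc_mem_paths_below_iff: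
  "C @ [x] \<in> paths_below (Suc n) d u \<longleftrightarrow>
     length C = n \<and> num_e (C @ [x]) = d \<and> (\<forall>k\<le>n. u k \<le> num_e (take k C)) \<and> u (Suc n) \<le> d"
    (is "?lhs \<longleftrightarrow> ?rhs")
proof
  assume ?lhs
  then have C: "length C = n" "num_e (C @ [x]) = d"
    by (simp_all add: mem_paths_below_iff del: num_e_append)
  have bound: "\<forall>k\<le>Suc n. u k \<le> num_e (take k (C @ [x]))"
    using \<open>?lhs\<close> unfolding mem_paths_below_iff by blast
  have "u k \<le> num_e (take k C)" if "k \<le> n" for k
    using bound[rule_format, of k] that C by simp
  moreover have "u (Suc n) \<le> d"
    using bound[rule_format, of "Suc n"] C by simp
  ultimately show ?rhs
    using C by blast
next
  assume ?rhs
  then show ?lhs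
    unfolding mem_paths_below_iff
  proof (intro conjI allI impI)
    fix k
    assume "k \<le> Suc n"
    with \<open>?rhs\<close> show "u k \<le> num_e (take k (C @ [x]))"
      by (cases "k = Suc n") (simp_all add: le_Suc_eq)
  qed simp_all
qed

lemma snoc_N_mem_paths_below_iff:
  "C @ [StN] \<in> paths_below (Suc n) d u \<longleftrightarrow> C \<in> prefixes_N n d u"
  unfolding snoc_mem_paths_below_iff by (auto simp: mem_paths_below_iff bound_before_N_def)

lemma snoc_E_mem_paths_below_iff:
  "C @ [StE] \<in> paths_below (Suc n) d u \<longleftrightarrow> C \<in> prefixes_E n d u"
  unfolding snoc_mem_paths_below_iff by (auto simp: mem_paths_below_iff bound_before_E_def)

lemma paths_below_SucE:
  assumes "C \<in> paths_below (Suc n) d u"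
  obtains (N) C' where "C = C' @ [StN]" "C' \<in> prefixes_N n d u"
    | (E) C' where "C = C' @ [StE]" "C' \<in> prefixes_E n d u"
proof -
  obtain C' x where "C = C' @ [x]"
    using paths_belowD(1)[OF assms] by (cases C rule: rev_exhaust) auto
  then show ?thesis
    using that assms snoc_N_mem_paths_below_iff snoc_E_mem_paths_below_iff by (cases x) auto
qed

lemma paths_below_weakly_above:
  assumes "C \<in> paths_below n d u" "weakly_above C C'" "length C' = n" "num_e C' = d"
  shows "C' \<in> paths_below n d u"
  using assms le_trans by (fastforce simp: mem_paths_below_iff weakly_above_def)

lemma Epos_snoc_N [simp]: "Epos (C @ [StN]) = Epos C"
  by (auto simp: Epos_def nth_append)

lemma Epos_snoc_E [simp]: "Epos (C @ [StE]) = insert (Suc (length C)) (Epos C)"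
  by (auto simp: Epos_def nth_append)

lemma Epos_subset: "Epos C \<subseteq> {1..length C}"
  by (auto simp: Epos_def)

lemma card_Epos_prefix: "card (Epos C \<inter> {..k}) = num_e (take k C)"
proof -
  let ?I = "{i. i < min k (length C) \<and> C ! i = StE}"
  have "Epos C \<inter> {..k} = Suc ` ?I"
  proof (intro equalityI subsetI)
    fix i
    assume "i \<in> Epos C \<inter> {..k}"
    then have "i = Suc (i - 1)" "i - 1 \<in> ?I"
      by (auto simp: Epos_def)
    then show "i \<in> Suc ` ?I"
      by (rule image_eqI)
  qed (auto simp: Epos_def)
  then have "card (Epos C \<inter> {..k}) = card ?I"
    by (simp add: card_image)
  also have "?I = {i. i < length (take k C) \<and> take k C ! i = StE}"
    by auto
  finally show ?thesis
    unfolding num_e_def by (simp only: length_filter_conv_card)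
qed

lemma card_Epos: "card (Epos C) = num_e C"
  using card_Epos_prefix[of C "length C"] Epos_subset[of C] by (simp add: Int_absorb2 subset_iff)

definition path_of_set :: "nat \<Rightarrow> nat set \<Rightarrow> step list" where
  "path_of_set n B = map (\<lambda>i. if Suc i \<in> B then StE else StN) [0..<n]"

lemma length_path_of_set [simp]: "length (path_of_set n B) = n"
  by (simp add: path_of_set_def)

lemma Epos_path_of_set: "Epos (path_of_set n B) = B \<inter> {1..n}"
proof (intro equalityI subsetI)
  fix i
  assume "i \<in> B \<inter> {1..n}"
  then have "i - 1 < n" "Suc (i - 1) = i"
    by auto
  then show "i \<in> Epos (path_of_set n B)"
    using \<open>i \<in> B \<inter> {1..n}\<close> by (auto simp: Epos_def path_of_set_def)
qed (auto simp: Epos_def path_of_set_def split: if_splits)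

lemma Epos_paths_below:
  "Epos ` paths_below n d u =
     {B. B \<subseteq> {1..n} \<and> card B = d \<and> (\<forall>k\<le>n. u k \<le> card (B \<inter> {..k}))}"
proof (intro equalityI subsetI)
  fix B
  assume "B \<in> Epos ` paths_below n d u"
  then show "B \<in> {B. B \<subseteq> {1..n} \<and> card B = d \<and> (\<forall>k\<le>n. u k \<le> card (B \<inter> {..k}))}"
    using Epos_subset by (fastforce simp: mem_paths_below_iff card_Epos card_Epos_prefix)
next
  fix B
  assume B: "B \<in> {B. B \<subseteq> {1..n} \<and> card B = d \<and> (\<forall>k\<le>n. u k \<le> card (B \<inter> {..k}))}"
  then have Epos_path: "Epos (path_of_set n B) = B"
    by (auto simp: Epos_path_of_set)
  have prefix: "num_e (take k (path_of_set n B)) = card (B \<inter> {..k})" for k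
    using card_Epos_prefix[of "path_of_set n B" k] by (simp add: Epos_path)
  have "B \<inter> {..n} = B"
    using B by auto
  then have "path_of_set n B \<in> paths_below n d u"
    using B prefix[of n] by (simp add: mem_paths_below_iff prefix)
  with Epos_path show "B \<in> Epos ` paths_below n d u"
    by (metis imageI)
qed

lemma card_prefix_exchange:
  fixes B1 B2 :: "nat set"
  assumes "finite B1" "x \<in> B1 - B2" "y \<in> B2 - B1" "\<forall>z\<in>B2 - B1. y \<le> z"
  shows "min (card (B1 \<inter> {..k})) (card (B2 \<inter> {..k})) \<le> card (insert y (B1 - {x}) \<inter> {..k})"
proof -
  let ?B = "insert y (B1 - {x})"
  have fin: "finite (?B \<inter> {..k})"
    by simp
  consider "k < x" | "x \<le> k" "y \<le> k" | "k < y"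
    by linarith
  then show ?thesis
  proof cases
    case 1
    then have "B1 \<inter> {..k} \<subseteq> ?B \<inter> {..k}"
      by auto
    then have "card (B1 \<inter> {..k}) \<le> card (?B \<inter> {..k})"
      using fin by (rule card_mono[rotated])
    then show ?thesis
      by simp
  next
    case 2
    then have "?B \<inter> {..k} = insert y (B1 \<inter> {..k} - {x})" "x \<in> B1 \<inter> {..k}"
      using assms(2) by auto
    moreover have "y \<notin> B1 \<inter> {..k} - {x}" "finite (B1 \<inter> {..k})"
      using assms(1,3) by auto
    ultimately have "card (?B \<inter> {..k}) = card (B1 \<inter> {..k})"
      using card.remove[of "B1 \<inter> {..k}" x] by simp
    then show ?thesis
      by simp
  next
    case 3
    have "B2 \<inter> {..k} \<subseteq> ?B \<inter> {..k}"
    proof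
      fix z
      assume z: "z \<in> B2 \<inter> {..k}"
      have "z \<in> B1"
      proof (rule ccontr)
        assume "z \<notin> B1"
        then have "y \<le> z"
          using assms(4) z by blast
        then show False
          using z 3 by auto
      qed
      then show "z \<in> ?B \<inter> {..k}"
        using z assms(2) by auto
    qed
    then have "card (B2 \<inter> {..k}) \<le> card (?B \<inter> {..k})"
      using fin by (rule card_mono[rotated])
    then show ?thesis
      by simp
  qed
qed

lemma Epos_paths_below_exchange:
  assumes B1: "B1 \<in> Epos ` paths_below n d u" and B2: "B2 \<in> Epos ` paths_below n d u"
    and x: "x \<in> B1 - B2"
  shows "\<exists>y\<in>B2 - B1. insert y (B1 - {x}) \<in> Epos ` paths_below n d u"
proof -
  have fin: "finite B1" "finite B2"
    using B1 B2 by (auto simp: Epos_paths_below intro: finite_subset)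
  have "B2 - B1 \<noteq> {}"
  proof
    assume "B2 - B1 = {}"
    moreover have "card B2 = card B1"
      using B1 B2 by (simp add: Epos_paths_below)
    ultimately have "B2 = B1"
      using card_subset_eq[OF fin(1)] by blast
    then show False
      using x by simp
  qed
  define y where "y = Min (B2 - B1)"
  have y: "y \<in> B2 - B1"
    unfolding y_def using fin \<open>B2 - B1 \<noteq> {}\<close> by (intro Min_in) auto
  have y_least: "\<forall>z\<in>B2 - B1. y \<le> z"
    unfolding y_def using fin by simp
  let ?B = "insert y (B1 - {x})"
  have "?B \<subseteq> {1..n}"
    using B1 B2 y by (auto simp: Epos_paths_below)
  moreover have "card ?B = card B1"
    using card.remove[OF fin(1), of x] card_insert_disjoint[of "B1 - {x}" y] fin(1) x y by simp
  moreover have "u k \<le> card (?B \<inter> {..k})" if "k \<le> n" for k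
  proof -
    have "u k \<le> min (card (B1 \<inter> {..k})) (card (B2 \<inter> {..k}))"
      using B1 B2 that by (simp add: Epos_paths_below)
    also have "\<dots> \<le> card (?B \<inter> {..k})"
      by (rule card_prefix_exchange[OF fin(1) x y y_least])
    finally show ?thesis .
  qed
  ultimately have "?B \<in> Epos ` paths_below n d u"
    using B1 by (simp add: Epos_paths_below)
  then show ?thesis
    using y by blast
qed

lemma matroid_Epos_paths_below:
  assumes "paths_below n d u \<noteq> {}"
  shows "matroid {1..n} (Epos ` paths_below n d u)"
  unfolding matroid_def
proof (intro conjI ballI)
  show "Epos ` paths_below n d u \<noteq> {}"
    using assms by simp
next
  fix B
  assume "B \<in> Epos ` paths_below n d u"
  then show "B \<subseteq> {1..n}"
    by (simp add: Epos_paths_below)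
next
  fix B1 B2 x
  assume "B1 \<in> Epos ` paths_below n d u" "B2 \<in> Epos ` paths_below n d u" "x \<in> B1 - B2"
  then show "\<exists>y\<in>B2 - B1. insert y (B1 - {x}) \<in> Epos ` paths_below n d u"
    by (rule Epos_paths_below_exchange)
qed simp

lemma weakly_above_Ltr:
  assumes "C \<in> paths n d"
  shows "weakly_above C (Ltr n d)"
  unfolding weakly_above_def
proof (intro allI impI)
  fix k
  have "num_e (take k C) \<le> min k d"
    using num_e_le_length[of "take k C"] num_e_append[of "take k C" "drop k C"] assms
    by (simp add: paths_def num_e_def)
  moreover have "num_e (take k (Ltr n d)) = min k d"
    by (simp add: Ltr_def num_e_def min_def)
  ultimately show "num_e (take k C) \<le> num_e (take k (Ltr n d))"
    by simp
qed

lemma paths_between_Ltr: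
  assumes "U \<in> paths n d"
  shows "paths_between n d U (Ltr n d) = paths_below n d (\<lambda>k. num_e (take k U))"
proof -
  have "weakly_above U C \<longleftrightarrow> (\<forall>k\<le>n. num_e (take k U) \<le> num_e (take k C))" if "C \<in> paths n d" for C
    using that by (simp add: weakly_above_def paths_def)
  then show ?thesis
    using weakly_above_Ltr by (auto simp: paths_between_def paths_below_def)
qed

section \<open>The recursion for the statistic\<close>

lemma prefixes_E_snoc:
  assumes "C \<in> prefixes_E n d u"
  shows "C @ [StE] \<in> paths_below (Suc n) d u" "length C = n" "Suc (num_e C) = d"
proof -
  show C: "C @ [StE] \<in> paths_below (Suc n) d u"
    using assms by (simp add: snoc_E_mem_paths_below_iff)
  show "length C = n" "Suc (num_e C) = d"
    using paths_belowD[OF C] by simp_all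
qed

text \<open>One direction shifts an \<open>n\<close> to an \<open>e\<close>; for the other, a path in \<open>prefixes_N n d u\<close>
  has \<open>d\<close> letters \<open>e\<close> and hence at most \<open>n - d\<close> unmarked ones.\<close>

lemma st_Ltr_prefixes_E_in_image_N_iff:
  assumes C: "C \<in> prefixes_E n d u"
  shows "st_Ltr C \<in> st_Ltr ` prefixes_N n d u \<longleftrightarrow> next_e_unmarked C"
proof
  assume "st_Ltr C \<in> st_Ltr ` prefixes_N n d u"
  then obtain C0 where C0: "C0 \<in> prefixes_N n d u" "st_Ltr C0 = st_Ltr C"
    by auto
  have "card (st_Ltr C) \<le> n - d" "d \<le> n"
    using card_st_Ltr_le[of C0] num_e_le_length[of C0] paths_belowD[OF C0(1)] C0(2) by simp_all
  moreover have "length C = n" "Suc (num_e C) = d"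
    using prefixes_E_snoc[OF C] by simp_all
  ultimately show "next_e_unmarked C"
    unfolding next_e_unmarked_def by linarith
next
  assume "next_e_unmarked C"
  then obtain C' where C': "length C' = length C" "num_e C' = Suc (num_e C)"
    "weakly_above C C'" "st_Ltr C' = st_Ltr C"
    by (blast dest: lower_path_with_same_st)
  have "weakly_above (C @ [StE]) (C' @ [StN])"
    using C' by (simp add: weakly_above_snoc)
  moreover have "length (C' @ [StN]) = Suc n" "num_e (C' @ [StN]) = d"
    using prefixes_E_snoc[OF C] C'(1,2) by simp_all
  ultimately have "C' @ [StN] \<in> paths_below (Suc n) d u"
    by (rule paths_below_weakly_above[OF prefixes_E_snoc(1)[OF C]])
  then have "C' \<in> prefixes_N n d u"
    by (simp add: snoc_N_mem_paths_below_iff)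
  then show "st_Ltr C \<in> st_Ltr ` prefixes_N n d u"
    using C'(4) by (metis image_eqI)
qed

lemma paths_below_Suc_eq:
  "paths_below (Suc n) d u =
     (\<lambda>C. C @ [StN]) ` prefixes_N n d u \<union> (\<lambda>C. C @ [StE]) ` prefixes_E n d u"
proof (intro equalityI subsetI)
  fix C
  assume "C \<in> paths_below (Suc n) d u"
  then show "C \<in> (\<lambda>C. C @ [StN]) ` prefixes_N n d u \<union> (\<lambda>C. C @ [StE]) ` prefixes_E n d u"
    by (cases rule: paths_below_SucE) auto
qed (auto simp: snoc_N_mem_paths_below_iff snoc_E_mem_paths_below_iff)

lemma st_Ltr_snoc_E_prefixes_E:
  assumes "C \<in> prefixes_E n d u"
  shows "st_Ltr (C @ [StE]) =
           (if st_Ltr C \<in> st_Ltr ` prefixes_N n d u then insert (Suc n) (st_Ltr C) else st_Ltr C)"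
  using assms st_Ltr_prefixes_E_in_image_N_iff[OF assms] prefixes_E_snoc(2)[OF assms]
  by (simp add: st_Ltr_snoc_E)

lemma image_insert_if_mem:
  "X0 \<union> (\<lambda>\<rho>. if \<rho> \<in> X0 then insert m \<rho> else \<rho>) ` X1 = X0 \<union> X1 \<union> insert m ` (X0 \<inter> X1)"
  by (auto simp: image_iff)

lemma st_Ltr_image_paths_below_Suc:
  fixes n d u
  defines "X0 \<equiv> st_Ltr ` prefixes_N n d u" and "X1 \<equiv> st_Ltr ` prefixes_E n d u"
  shows "st_Ltr ` paths_below (Suc n) d u = X0 \<union> X1 \<union> insert (Suc n) ` (X0 \<inter> X1)"
proof -
  have "st_Ltr ` (\<lambda>C. C @ [StE]) ` prefixes_E n d u =
      (\<lambda>\<rho>. if \<rho> \<in> X0 then insert (Suc n) \<rho> else \<rho>) ` X1"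
    unfolding X0_def X1_def image_image using st_Ltr_snoc_E_prefixes_E by (rule image_cong[OF refl])
  then have "st_Ltr ` paths_below (Suc n) d u =
      X0 \<union> (\<lambda>\<rho>. if \<rho> \<in> X0 then insert (Suc n) \<rho> else \<rho>) ` X1"
    unfolding paths_below_Suc_eq image_Un by (simp add: image_image X0_def)
  then show ?thesis
    by (simp only: image_insert_if_mem)
qed

section \<open>Multilinear polynomials on 0/1 points\<close>

definition set_lex_less :: "nat set \<Rightarrow> nat set \<Rightarrow> bool" where
  "set_lex_less \<rho> \<sigma> \<longleftrightarrow> (\<exists>i. i \<in> \<sigma> \<and> i \<notin> \<rho> \<and> (\<forall>j<i. j \<in> \<rho> \<longleftrightarrow> j \<in> \<sigma>))"

lemma set_lex_less_irrefl: "\<not> set_lex_less \<sigma> \<sigma>"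
  by (auto simp: set_lex_less_def)

lemma set_lex_less_trans:
  assumes "set_lex_less \<rho> \<sigma>" "set_lex_less \<sigma> \<tau>"
  shows "set_lex_less \<rho> \<tau>"
proof -
  obtain i where i: "i \<in> \<sigma>" "i \<notin> \<rho>" "\<forall>j<i. j \<in> \<rho> \<longleftrightarrow> j \<in> \<sigma>"
    using assms(1) by (auto simp: set_lex_less_def)
  obtain i' where i': "i' \<in> \<tau>" "i' \<notin> \<sigma>" "\<forall>j<i'. j \<in> \<sigma> \<longleftrightarrow> j \<in> \<tau>"
    using assms(2) by (auto simp: set_lex_less_def)
  consider "i < i'" | "i' < i" | "i = i'"
    by linarith
  then show ?thesis
  proof cases
    case 1
    then show ?thesis
      unfolding set_lex_less_def using i i' by (intro exI[of _ i]) auto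
  next
    case 2
    then show ?thesis
      unfolding set_lex_less_def using i i' by (intro exI[of _ i']) auto
  qed (use i i' in auto)
qed

lemma set_lex_less_asym: "set_lex_less \<rho> \<sigma> \<Longrightarrow> \<not> set_lex_less \<sigma> \<rho>"
  using set_lex_less_trans set_lex_less_irrefl by blast

lemma set_lex_less_linear:
  assumes "\<sigma> \<noteq> \<rho>"
  shows "set_lex_less \<sigma> \<rho> \<or> set_lex_less \<rho> \<sigma>"
proof -
  have "\<exists>i. (i \<in> \<sigma>) \<noteq> (i \<in> \<rho>)"
    using assms by auto
  define i where "i = (LEAST i. (i \<in> \<sigma>) \<noteq> (i \<in> \<rho>))"
  have "(i \<in> \<sigma>) \<noteq> (i \<in> \<rho>)"
    unfolding i_def by (rule LeastI_ex) fact
  moreover have "\<forall>j<i. j \<in> \<sigma> \<longleftrightarrow> j \<in> \<rho>"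
    unfolding i_def using not_less_Least by blast
  ultimately show ?thesis
    unfolding set_lex_less_def by (cases "i \<in> \<rho>") auto
qed

lemma set_lex_less_insert: "j \<notin> \<sigma> \<Longrightarrow> set_lex_less \<sigma> (insert j \<sigma>)"
  unfolding set_lex_less_def by (intro exI[of _ j]) auto

lemma set_lex_less_insert_insert_iff:
  assumes "j \<notin> \<rho>" "j \<notin> \<sigma>"
  shows "set_lex_less (insert j \<rho>) (insert j \<sigma>) \<longleftrightarrow> set_lex_less \<rho> \<sigma>"
proof
  assume "set_lex_less (insert j \<rho>) (insert j \<sigma>)"
  then obtain i where "i \<in> insert j \<sigma>" "i \<notin> insert j \<rho>" "\<forall>k<i. k \<in> insert j \<rho> \<longleftrightarrow> k \<in> insert j \<sigma>"
    by (auto simp: set_lex_less_def)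
  then show "set_lex_less \<rho> \<sigma>"
    using assms unfolding set_lex_less_def by (intro exI[of _ i]) auto
next
  assume "set_lex_less \<rho> \<sigma>"
  then obtain i where "i \<in> \<sigma>" "i \<notin> \<rho>" "\<forall>k<i. k \<in> \<rho> \<longleftrightarrow> k \<in> \<sigma>"
    by (auto simp: set_lex_less_def)
  then show "set_lex_less (insert j \<rho>) (insert j \<sigma>)"
    using assms unfolding set_lex_less_def by (intro exI[of _ i]) auto
qed

text \<open>Adding an element larger than all others only matters for the last comparison.\<close>

lemma set_lex_less_insert_left_iff:
  assumes "\<tau> \<subseteq> {..<m}"
  shows "set_lex_less (insert m \<rho>) \<tau> \<longleftrightarrow> set_lex_less \<rho> \<tau>"
proof
  assume "set_lex_less (insert m \<rho>) \<tau>"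
  then obtain i where "i \<in> \<tau>" "i \<notin> insert m \<rho>" "\<forall>j<i. j \<in> insert m \<rho> \<longleftrightarrow> j \<in> \<tau>"
    by (auto simp: set_lex_less_def)
  moreover have "m \<notin> \<tau>"
    using assms by auto
  ultimately show "set_lex_less \<rho> \<tau>"
    unfolding set_lex_less_def by (intro exI[of _ i]) auto
next
  assume "set_lex_less \<rho> \<tau>"
  then obtain i where "i \<in> \<tau>" "i \<notin> \<rho>" "\<forall>j<i. j \<in> \<rho> \<longleftrightarrow> j \<in> \<tau>"
    by (auto simp: set_lex_less_def)
  moreover from this have "i < m"
    using assms by auto
  ultimately show "set_lex_less (insert m \<rho>) \<tau>"
    unfolding set_lex_less_def by (intro exI[of _ i]) auto
qed

lemma set_lex_less_insert_right_iff:
  assumes "\<rho> \<subseteq> {..<m}" "\<tau> \<subseteq> {..<m}"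
  shows "set_lex_less \<rho> (insert m \<tau>) \<longleftrightarrow> \<rho> = \<tau> \<or> set_lex_less \<rho> \<tau>"
proof
  assume "set_lex_less \<rho> (insert m \<tau>)"
  then obtain i where i: "i \<in> insert m \<tau>" "i \<notin> \<rho>" "\<forall>j<i. j \<in> \<rho> \<longleftrightarrow> j \<in> insert m \<tau>"
    by (auto simp: set_lex_less_def)
  show "\<rho> = \<tau> \<or> set_lex_less \<rho> \<tau>"
  proof (cases "i = m")
    case True
    then have "\<rho> = \<tau>"
      using i(3) assms by blast
    then show ?thesis
      by simp
  next
    case False
    then have "i < m"
      using i(1) assms(2) by auto
    then show ?thesis
      using i False unfolding set_lex_less_def by (intro disjI2 exI[of _ i]) auto
  qed
next
  assume "\<rho> = \<tau> \<or> set_lex_less \<rho> \<tau>"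
  then show "set_lex_less \<rho> (insert m \<tau>)"
  proof
    assume "set_lex_less \<rho> \<tau>"
    then obtain i where "i \<in> \<tau>" "i \<notin> \<rho>" "\<forall>j<i. j \<in> \<rho> \<longleftrightarrow> j \<in> \<tau>"
      by (auto simp: set_lex_less_def)
    moreover from this have "i < m"
      using assms by auto
    ultimately show ?thesis
      unfolding set_lex_less_def by (intro exI[of _ i]) auto
  qed (use assms in \<open>auto intro: set_lex_less_insert\<close>)
qed

text \<open>A multilinear polynomial \<open>\<Sum>\<sigma>. p \<sigma> * x\<^sup>\<sigma>\<close> is represented by its coefficient
  function \<open>p\<close>; \<open>ml_eval p B\<close> is its value at the characteristic vector of \<open>B\<close>.\<close>

definition ml_poly_on :: "nat set \<Rightarrow> (nat set \<Rightarrow> real) \<Rightarrow> bool" where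
  "ml_poly_on E p \<longleftrightarrow> (\<forall>\<sigma>. p \<sigma> \<noteq> 0 \<longrightarrow> \<sigma> \<subseteq> E)"

definition ml_eval :: "(nat set \<Rightarrow> real) \<Rightarrow> nat set \<Rightarrow> real" where
  "ml_eval p B = (\<Sum>\<sigma>\<in>Pow B. p \<sigma>)"

definition ml_vanishes_on :: "nat set set \<Rightarrow> (nat set \<Rightarrow> real) \<Rightarrow> bool" where
  "ml_vanishes_on V p \<longleftrightarrow> (\<forall>B\<in>V. ml_eval p B = 0)"

definition ml_lead :: "(nat set \<Rightarrow> real) \<Rightarrow> nat set \<Rightarrow> bool" where
  "ml_lead p \<tau> \<longleftrightarrow> p \<tau> \<noteq> 0 \<and> (\<forall>\<sigma>. p \<sigma> \<noteq> 0 \<longrightarrow> \<sigma> = \<tau> \<or> set_lex_less \<sigma> \<tau>)"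

definition ml_lead_sets :: "nat set \<Rightarrow> nat set set \<Rightarrow> nat set set" where
  "ml_lead_sets E V = {\<tau>. \<exists>p. ml_poly_on E p \<and> ml_vanishes_on V p \<and> ml_lead p \<tau>}"

definition ml_standard_sets :: "nat set \<Rightarrow> nat set set \<Rightarrow> nat set set" where
  "ml_standard_sets E V = {\<tau>. \<tau> \<subseteq> E \<and> \<tau> \<notin> ml_lead_sets E V}"

lemma ml_lead_setsI: "ml_poly_on E p \<Longrightarrow> ml_vanishes_on V p \<Longrightarrow> ml_lead p \<tau> \<Longrightarrow> \<tau> \<in> ml_lead_sets E V"
  by (auto simp: ml_lead_sets_def)

lemma ml_lead_setsE:
  assumes "\<tau> \<in> ml_lead_sets E V"
  obtains p where "ml_poly_on E p" "ml_vanishes_on V p" "ml_lead p \<tau>"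
  using assms by (auto simp: ml_lead_sets_def)

lemma ml_lead_sets_subset: "\<tau> \<in> ml_lead_sets E V \<Longrightarrow> \<tau> \<subseteq> E"
  by (auto simp: ml_lead_sets_def ml_poly_on_def ml_lead_def)

lemma ml_poly_on_mono: "ml_poly_on E p \<Longrightarrow> E \<subseteq> E' \<Longrightarrow> ml_poly_on E' p"
  by (auto simp: ml_poly_on_def)

lemma ml_poly_on_pointwise:
  assumes "ml_poly_on E p" "ml_poly_on E q" "\<And>\<sigma>. p \<sigma> = 0 \<Longrightarrow> q \<sigma> = 0 \<Longrightarrow> r \<sigma> = 0"
  shows "ml_poly_on E r"
  using assms unfolding ml_poly_on_def by metis

lemma ml_eval_add: "ml_eval (\<lambda>\<sigma>. p \<sigma> + q \<sigma>) B = ml_eval p B + ml_eval q B"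
  by (simp add: ml_eval_def sum.distrib)

lemma ml_eval_scale: "ml_eval (\<lambda>\<sigma>. c * p \<sigma>) B = c * ml_eval p B"
  by (simp add: ml_eval_def sum_distrib_left)

lemma ml_eval_zero [simp]: "ml_eval (\<lambda>_. 0) B = 0"
  by (simp add: ml_eval_def)

lemma ml_eval_cong: "(\<And>\<sigma>. \<sigma> \<subseteq> B \<Longrightarrow> p \<sigma> = q \<sigma>) \<Longrightarrow> ml_eval p B = ml_eval q B"
  by (simp add: ml_eval_def)

lemma ml_eval_insert:
  assumes "finite B" "j \<notin> B"
  shows "ml_eval p (insert j B) = ml_eval p B + ml_eval (\<lambda>\<sigma>. p (insert j \<sigma>)) B"
proof -
  have "inj_on (insert j) (Pow B)"
    using assms(2) by (intro inj_onI) (metis PowD insert_ident subsetD)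
  moreover have "Pow B \<inter> insert j ` Pow B = {}"
    using assms(2) by auto
  ultimately show ?thesis
    using assms(1) by (simp add: ml_eval_def Pow_insert sum.union_disjoint sum.reindex)
qed

text \<open>Splitting off the variable \<open>x\<^sub>m\<close>: \<open>p = ml_part0 m p + x\<^sub>m * ml_part1 m p\<close>.\<close>

definition ml_part0 :: "nat \<Rightarrow> (nat set \<Rightarrow> real) \<Rightarrow> nat set \<Rightarrow> real" where
  "ml_part0 m p = (\<lambda>\<sigma>. if m \<in> \<sigma> then 0 else p \<sigma>)"

definition ml_part1 :: "nat \<Rightarrow> (nat set \<Rightarrow> real) \<Rightarrow> nat set \<Rightarrow> real" where
  "ml_part1 m p = (\<lambda>\<sigma>. if m \<in> \<sigma> then 0 else p (insert m \<sigma>))"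

definition ml_combine :: "nat \<Rightarrow> (nat set \<Rightarrow> real) \<Rightarrow> (nat set \<Rightarrow> real) \<Rightarrow> nat set \<Rightarrow> real" where
  "ml_combine m g h = (\<lambda>\<sigma>. if m \<in> \<sigma> then h (\<sigma> - {m}) else g \<sigma>)"

lemma ml_poly_on_not_subset: "ml_poly_on E p \<Longrightarrow> \<not> \<sigma> \<subseteq> E \<Longrightarrow> p \<sigma> = 0"
  by (auto simp: ml_poly_on_def)

lemma ml_parts_combine:
  assumes "ml_poly_on E g" "ml_poly_on E h" "m \<notin> E"
  shows "ml_part0 m (ml_combine m g h) = g" "ml_part1 m (ml_combine m g h) = h"
proof -
  have "g \<sigma> = 0" "h \<sigma> = 0" if "m \<in> \<sigma>" for \<sigma>
    using that assms by (auto intro: ml_poly_on_not_subset)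
  then show "ml_part0 m (ml_combine m g h) = g" "ml_part1 m (ml_combine m g h) = h"
    by (auto simp: ml_part0_def ml_part1_def ml_combine_def fun_eq_iff)
qed

lemma ml_combine_parts: "ml_combine m (ml_part0 m p) (ml_part1 m p) = p"
proof
  fix \<sigma>
  show "ml_combine m (ml_part0 m p) (ml_part1 m p) \<sigma> = p \<sigma>"
    by (cases "m \<in> \<sigma>") (simp_all add: ml_combine_def ml_part0_def ml_part1_def insert_absorb)
qed

lemma ml_poly_on_combine:
  assumes "ml_poly_on E g" "ml_poly_on E h"
  shows "ml_poly_on (insert m E) (ml_combine m g h)"
  unfolding ml_poly_on_def
proof (intro allI impI)
  fix \<sigma>
  assume "ml_combine m g h \<sigma> \<noteq> 0"
  then have "\<sigma> - {m} \<subseteq> E"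
    using assms by (auto simp: ml_combine_def ml_poly_on_def split: if_splits)
  then show "\<sigma> \<subseteq> insert m E"
    by auto
qed

lemma ml_poly_on_parts:
  assumes "ml_poly_on (insert m E) p"
  shows "ml_poly_on E (ml_part0 m p)" "ml_poly_on E (ml_part1 m p)"
  using assms by (auto simp: ml_poly_on_def ml_part0_def ml_part1_def)

lemma ml_eval_insert_parts:
  assumes "finite B" "m \<notin> B"
  shows "ml_eval p B = ml_eval (ml_part0 m p) B"
    and "ml_eval p (insert m B) = ml_eval (ml_part0 m p) B + ml_eval (ml_part1 m p) B"
proof -
  show B: "ml_eval p B = ml_eval (ml_part0 m p) B"
    using assms(2) by (intro ml_eval_cong) (auto simp: ml_part0_def)
  have "ml_eval (\<lambda>\<sigma>. p (insert m \<sigma>)) B = ml_eval (ml_part1 m p) B"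
    using assms(2) by (intro ml_eval_cong) (auto simp: ml_part1_def)
  then show "ml_eval p (insert m B) = ml_eval (ml_part0 m p) B + ml_eval (ml_part1 m p) B"
    using ml_eval_insert[OF assms] B by simp
qed

definition deletion_sets :: "nat \<Rightarrow> nat set set \<Rightarrow> nat set set" where
  "deletion_sets m V = {B \<in> V. m \<notin> B}"

definition contraction_sets :: "nat \<Rightarrow> nat set set \<Rightarrow> nat set set" where
  "contraction_sets m V = (\<lambda>B. B - {m}) ` {B \<in> V. m \<in> B}"

lemma ml_vanishes_on_iff_parts:
  assumes "\<forall>B\<in>V. finite B"
  shows "ml_vanishes_on V p \<longleftrightarrow>
           ml_vanishes_on (deletion_sets m V) (ml_part0 m p) \<and>
           ml_vanishes_on (contraction_sets m V) (\<lambda>\<sigma>. ml_part0 m p \<sigma> + ml_part1 m p \<sigma>)"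
proof -
  have "ml_eval p B = (if m \<in> B then ml_eval (\<lambda>\<sigma>. ml_part0 m p \<sigma> + ml_part1 m p \<sigma>) (B - {m})
                       else ml_eval (ml_part0 m p) B)" if "B \<in> V" for B
    using ml_eval_insert_parts[of "B - {m}" m p] ml_eval_insert_parts(1)[of B m p] assms that
    by (cases "m \<in> B") (simp_all add: ml_eval_add insert_absorb)
  then have "ml_vanishes_on V p \<longleftrightarrow>
      (\<forall>B\<in>V. m \<notin> B \<longrightarrow> ml_eval (ml_part0 m p) B = 0) \<and>
      (\<forall>B\<in>V. m \<in> B \<longrightarrow> ml_eval (\<lambda>\<sigma>. ml_part0 m p \<sigma> + ml_part1 m p \<sigma>) (B - {m}) = 0)"
    unfolding ml_vanishes_on_def by (metis (full_types))
  then show ?thesis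
    unfolding ml_vanishes_on_def deletion_sets_def contraction_sets_def by blast
qed

lemma ml_vanishes_on_combine_iff:
  assumes "\<forall>B\<in>V. finite B" "ml_poly_on E g" "ml_poly_on E h" "m \<notin> E"
  shows "ml_vanishes_on V (ml_combine m g h) \<longleftrightarrow>
           ml_vanishes_on (deletion_sets m V) g \<and>
           ml_vanishes_on (contraction_sets m V) (\<lambda>\<sigma>. g \<sigma> + h \<sigma>)"
  using ml_vanishes_on_iff_parts[OF assms(1), of "ml_combine m g h" m] ml_parts_combine[OF assms(2-4)]
  by simp

lemma ml_lead_add_lower:
  assumes "ml_lead g \<tau>" "\<forall>\<sigma>. h \<sigma> \<noteq> 0 \<longrightarrow> set_lex_less \<sigma> \<tau>"
  shows "ml_lead (\<lambda>\<sigma>. g \<sigma> + h \<sigma>) \<tau>"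
  unfolding ml_lead_def
proof (intro conjI allI impI)
  have "h \<tau> = 0"
    using assms(2) set_lex_less_irrefl by blast
  then show "g \<tau> + h \<tau> \<noteq> 0"
    using assms(1) by (simp add: ml_lead_def)
next
  fix \<sigma>
  assume "g \<sigma> + h \<sigma> \<noteq> 0"
  then have "g \<sigma> \<noteq> 0 \<or> h \<sigma> \<noteq> 0"
    by auto
  then show "\<sigma> = \<tau> \<or> set_lex_less \<sigma> \<tau>"
    using assms by (auto simp: ml_lead_def)
qed

lemma ml_lead_add_cases:
  assumes "\<forall>\<sigma>. g \<sigma> \<noteq> 0 \<longrightarrow> \<sigma> = \<tau> \<or> set_lex_less \<sigma> \<tau>" "ml_lead h \<tau>"
  shows "ml_lead g \<tau> \<or> ml_lead (\<lambda>\<sigma>. g \<sigma> + h \<sigma>) \<tau>"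
proof (cases "g \<tau> = 0")
  case True
  have "ml_lead (\<lambda>\<sigma>. g \<sigma> + h \<sigma>) \<tau>"
    unfolding ml_lead_def
  proof (intro conjI allI impI)
    show "g \<tau> + h \<tau> \<noteq> 0"
      using True assms(2) by (simp add: ml_lead_def)
  next
    fix \<sigma>
    assume "g \<sigma> + h \<sigma> \<noteq> 0"
    then have "g \<sigma> \<noteq> 0 \<or> h \<sigma> \<noteq> 0"
      by auto
    then show "\<sigma> = \<tau> \<or> set_lex_less \<sigma> \<tau>"
      using assms by (auto simp: ml_lead_def)
  qed
  then show ?thesis ..
qed (use assms(1) in \<open>simp add: ml_lead_def\<close>)

text \<open>Since \<open>m\<close> is the largest index, \<open>x\<^sub>m\<close> is the smallest variable: the lead of \<open>p\<close> is the
  larger of the lead of \<open>ml_part0 m p\<close> and \<open>m\<close> added to the lead of \<open>ml_part1 m p\<close>.\<close>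

lemma ml_lead_iff_parts:
  assumes "\<tau> \<subseteq> {..<m}"
  shows "ml_lead p \<tau> \<longleftrightarrow>
           ml_lead (ml_part0 m p) \<tau> \<and> (\<forall>\<sigma>. ml_part1 m p \<sigma> \<noteq> 0 \<longrightarrow> set_lex_less \<sigma> \<tau>)"
    (is "_ \<longleftrightarrow> ?parts")
proof
  have m: "m \<notin> \<tau>"
    using assms by auto
  assume lead: "ml_lead p \<tau>"
  have "ml_lead (ml_part0 m p) \<tau>"
    using lead m by (auto simp: ml_lead_def ml_part0_def)
  moreover have "set_lex_less \<sigma> \<tau>" if "ml_part1 m p \<sigma> \<noteq> 0" for \<sigma>
  proof -
    have "m \<notin> \<sigma>" "p (insert m \<sigma>) \<noteq> 0"
      using that by (auto simp: ml_part1_def split: if_splits)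
    then have "set_lex_less (insert m \<sigma>) \<tau>"
      using lead m by (auto simp: ml_lead_def)
    then show ?thesis
      using set_lex_less_insert_left_iff[OF assms] by simp
  qed
  ultimately show ?parts
    by blast
next
  have m: "m \<notin> \<tau>"
    using assms by auto
  assume parts: ?parts
  show "ml_lead p \<tau>"
    unfolding ml_lead_def
  proof (intro conjI allI impI)
    show "p \<tau> \<noteq> 0"
      using parts m by (simp add: ml_lead_def ml_part0_def)
  next
    fix \<sigma>
    assume "p \<sigma> \<noteq> 0"
    show "\<sigma> = \<tau> \<or> set_lex_less \<sigma> \<tau>"
    proof (cases "m \<in> \<sigma>")
      case False
      then have "ml_part0 m p \<sigma> \<noteq> 0"
        using \<open>p \<sigma> \<noteq> 0\<close> by (simp add: ml_part0_def)
      then show ?thesis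
        using parts by (simp add: ml_lead_def)
    next
      case True
      then have "ml_part1 m p (\<sigma> - {m}) \<noteq> 0"
        using \<open>p \<sigma> \<noteq> 0\<close> by (simp add: ml_part1_def insert_absorb)
      then have "set_lex_less (\<sigma> - {m}) \<tau>"
        using parts by blast
      then show ?thesis
        using True set_lex_less_insert_left_iff[OF assms, of "\<sigma> - {m}"] by (simp add: insert_absorb)
    qed
  qed
qed

lemma ml_lead_insert_iff_parts:
  assumes "\<tau> \<subseteq> {..<m}" "ml_poly_on {..m} p"
  shows "ml_lead p (insert m \<tau>) \<longleftrightarrow>
           ml_lead (ml_part1 m p) \<tau> \<and> (\<forall>\<sigma>. ml_part0 m p \<sigma> \<noteq> 0 \<longrightarrow> \<sigma> = \<tau> \<or> set_lex_less \<sigma> \<tau>)"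
    (is "_ \<longleftrightarrow> ?parts")
proof -
  have m: "m \<notin> \<tau>"
    using assms by auto
  have below: "\<sigma> \<subseteq> {..<m}" if "p \<sigma> \<noteq> 0" "m \<notin> \<sigma>" for \<sigma>
  proof -
    have "\<sigma> \<subseteq> {..m}"
      using that(1) assms(2) by (simp add: ml_poly_on_def)
    then show ?thesis
      using that(2) by (force simp: subset_iff le_less)
  qed
  have without_m: "\<sigma> = insert m \<tau> \<or> set_lex_less \<sigma> (insert m \<tau>) \<longleftrightarrow> \<sigma> = \<tau> \<or> set_lex_less \<sigma> \<tau>"
    if "p \<sigma> \<noteq> 0" "m \<notin> \<sigma>" for \<sigma>
    using that set_lex_less_insert_right_iff[OF below[OF that] assms(1)] by auto
  have with_m: "insert m \<sigma> = insert m \<tau> \<or> set_lex_less (insert m \<sigma>) (insert m \<tau>) \<longleftrightarrow>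
      \<sigma> = \<tau> \<or> set_lex_less \<sigma> \<tau>" if "m \<notin> \<sigma>" for \<sigma>
    using that m set_lex_less_insert_insert_iff[of m \<sigma> \<tau>] by (metis insert_ident)
  show ?thesis
  proof
    assume lead: "ml_lead p (insert m \<tau>)"
    have "ml_lead (ml_part1 m p) \<tau>"
      using lead m with_m by (auto simp: ml_lead_def ml_part1_def)
    moreover have "\<sigma> = \<tau> \<or> set_lex_less \<sigma> \<tau>" if "ml_part0 m p \<sigma> \<noteq> 0" for \<sigma>
      using that lead without_m by (auto simp: ml_lead_def ml_part0_def split: if_splits)
    ultimately show ?parts
      by blast
  next
    assume parts: ?parts
    show "ml_lead p (insert m \<tau>)"
      unfolding ml_lead_def
    proof (intro conjI allI impI)
      show "p (insert m \<tau>) \<noteq> 0"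
        using parts m by (simp add: ml_lead_def ml_part1_def)
    next
      fix \<sigma>
      assume "p \<sigma> \<noteq> 0"
      show "\<sigma> = insert m \<tau> \<or> set_lex_less \<sigma> (insert m \<tau>)"
      proof (cases "m \<in> \<sigma>")
        case False
        then show ?thesis
          using parts without_m \<open>p \<sigma> \<noteq> 0\<close> by (simp add: ml_part0_def)
      next
        case True
        then have "ml_part1 m p (\<sigma> - {m}) \<noteq> 0"
          using \<open>p \<sigma> \<noteq> 0\<close> by (simp add: ml_part1_def insert_absorb)
        then have "\<sigma> - {m} = \<tau> \<or> set_lex_less (\<sigma> - {m}) \<tau>"
          using parts by (simp add: ml_lead_def)
        then show ?thesis
          using with_m[of "\<sigma> - {m}"] True by (simp add: insert_absorb)
      qed
    qed
  qed
qed

section \<open>The recursion for standard sets\<close>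

lemma ml_lead_sets_insert_var_iff:
  assumes "\<forall>B\<in>V. finite B" "m \<notin> E"
  shows "\<tau> \<in> ml_lead_sets (insert m E) V \<longleftrightarrow>
           (\<exists>g h. ml_poly_on E g \<and> ml_poly_on E h \<and> ml_vanishes_on (deletion_sets m V) g \<and>
              ml_vanishes_on (contraction_sets m V) (\<lambda>\<sigma>. g \<sigma> + h \<sigma>) \<and> ml_lead (ml_combine m g h) \<tau>)"
proof
  assume "\<tau> \<in> ml_lead_sets (insert m E) V"
  then obtain p where p: "ml_poly_on (insert m E) p" "ml_vanishes_on V p" "ml_lead p \<tau>"
    by (rule ml_lead_setsE)
  then show "\<exists>g h. ml_poly_on E g \<and> ml_poly_on E h \<and> ml_vanishes_on (deletion_sets m V) g \<and>
      ml_vanishes_on (contraction_sets m V) (\<lambda>\<sigma>. g \<sigma> + h \<sigma>) \<and> ml_lead (ml_combine m g h) \<tau>"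
    using ml_poly_on_parts[OF p(1)] ml_vanishes_on_iff_parts[OF assms(1), of p m]
    by (intro exI[of _ "ml_part0 m p"] exI[of _ "ml_part1 m p"]) (simp add: ml_combine_parts)
next
  assume "\<exists>g h. ml_poly_on E g \<and> ml_poly_on E h \<and> ml_vanishes_on (deletion_sets m V) g \<and>
      ml_vanishes_on (contraction_sets m V) (\<lambda>\<sigma>. g \<sigma> + h \<sigma>) \<and> ml_lead (ml_combine m g h) \<tau>"
  then obtain g h where gh: "ml_poly_on E g" "ml_poly_on E h" "ml_vanishes_on (deletion_sets m V) g"
    "ml_vanishes_on (contraction_sets m V) (\<lambda>\<sigma>. g \<sigma> + h \<sigma>)" "ml_lead (ml_combine m g h) \<tau>"
    by blast
  have "ml_poly_on (insert m E) (ml_combine m g h)"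
    using gh(1,2) by (rule ml_poly_on_combine)
  moreover have "ml_vanishes_on V (ml_combine m g h)"
    using gh(3,4) ml_vanishes_on_combine_iff[OF assms(1) gh(1,2) assms(2)] by simp
  ultimately show "\<tau> \<in> ml_lead_sets (insert m E) V"
    using gh(5) by (rule ml_lead_setsI)
qed

lemma ml_lead_sets_iff_parts:
  assumes "\<forall>B\<in>V. finite B" "E \<subseteq> {..<m}" "\<tau> \<subseteq> E"
  shows "\<tau> \<in> ml_lead_sets (insert m E) V \<longleftrightarrow>
           \<tau> \<in> ml_lead_sets E (deletion_sets m V) \<and> \<tau> \<in> ml_lead_sets E (contraction_sets m V)"
proof
  have \<tau>: "\<tau> \<subseteq> {..<m}" and m: "m \<notin> E"
    using assms(2,3) by auto
  assume "\<tau> \<in> ml_lead_sets (insert m E) V"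
  then obtain g h where gh: "ml_poly_on E g" "ml_poly_on E h" "ml_vanishes_on (deletion_sets m V) g"
    "ml_vanishes_on (contraction_sets m V) (\<lambda>\<sigma>. g \<sigma> + h \<sigma>)" "ml_lead (ml_combine m g h) \<tau>"
    using ml_lead_sets_insert_var_iff[OF assms(1) m] by blast
  then have lead: "ml_lead g \<tau>" "\<forall>\<sigma>. h \<sigma> \<noteq> 0 \<longrightarrow> set_lex_less \<sigma> \<tau>"
    using ml_lead_iff_parts[OF \<tau>, of "ml_combine m g h"] ml_parts_combine[OF gh(1,2) m] by simp_all
  have "ml_poly_on E (\<lambda>\<sigma>. g \<sigma> + h \<sigma>)"
    using gh(1,2) by (rule ml_poly_on_pointwise) simp
  then show "\<tau> \<in> ml_lead_sets E (deletion_sets m V) \<and> \<tau> \<in> ml_lead_sets E (contraction_sets m V)"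
    using ml_lead_setsI[OF gh(1,3) lead(1)] ml_lead_setsI[OF _ gh(4) ml_lead_add_lower[OF lead]] by blast
next
  have \<tau>: "\<tau> \<subseteq> {..<m}" and m: "m \<notin> E"
    using assms(2,3) by auto
  assume "\<tau> \<in> ml_lead_sets E (deletion_sets m V) \<and> \<tau> \<in> ml_lead_sets E (contraction_sets m V)"
  then have "\<tau> \<in> ml_lead_sets E (deletion_sets m V)" "\<tau> \<in> ml_lead_sets E (contraction_sets m V)"
    by simp_all
  then obtain g0 g1 where
    g0: "ml_poly_on E g0" "ml_vanishes_on (deletion_sets m V) g0" "ml_lead g0 \<tau>" and
    g1: "ml_poly_on E g1" "ml_vanishes_on (contraction_sets m V) g1" "ml_lead g1 \<tau>"
    by (elim ml_lead_setsE)
  define c where "c = g0 \<tau> / g1 \<tau>"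
  define h where "h = (\<lambda>\<sigma>. c * g1 \<sigma> - g0 \<sigma>)"
  have h: "ml_poly_on E h"
    using g0(1) g1(1) by (rule ml_poly_on_pointwise) (simp add: h_def)
  have "h \<tau> = 0"
    using g1(3) by (simp add: h_def c_def ml_lead_def)
  have "(\<lambda>\<sigma>. g0 \<sigma> + h \<sigma>) = (\<lambda>\<sigma>. c * g1 \<sigma>)"
    by (simp add: h_def)
  then have "ml_vanishes_on (contraction_sets m V) (\<lambda>\<sigma>. g0 \<sigma> + h \<sigma>)"
    using g1(2) by (simp add: ml_vanishes_on_def ml_eval_scale)
  moreover have "ml_lead (ml_combine m g0 h) \<tau>"
    unfolding ml_lead_iff_parts[OF \<tau>, of "ml_combine m g0 h"] ml_parts_combine[OF g0(1) h m]
  proof (intro conjI allI impI)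
    fix \<sigma>
    assume "h \<sigma> \<noteq> 0"
    then have "g0 \<sigma> \<noteq> 0 \<or> g1 \<sigma> \<noteq> 0"
      by (auto simp: h_def)
    then have "\<sigma> = \<tau> \<or> set_lex_less \<sigma> \<tau>"
      using g0(3) g1(3) by (auto simp: ml_lead_def)
    then show "set_lex_less \<sigma> \<tau>"
      using \<open>h \<sigma> \<noteq> 0\<close> \<open>h \<tau> = 0\<close> by auto
  qed (rule g0(3))
  ultimately show "\<tau> \<in> ml_lead_sets (insert m E) V"
    using ml_lead_sets_insert_var_iff[OF assms(1) m] g0(1,2) h by blast
qed

lemma ml_lead_sets_insert_iff_parts:
  assumes "\<forall>B\<in>V. finite B" "E \<subseteq> {..<m}" "\<tau> \<subseteq> E"
  shows "insert m \<tau> \<in> ml_lead_sets (insert m E) V \<longleftrightarrow>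
           \<tau> \<in> ml_lead_sets E (deletion_sets m V) \<or> \<tau> \<in> ml_lead_sets E (contraction_sets m V)"
proof -
  have \<tau>: "\<tau> \<subseteq> {..<m}" and m: "m \<notin> E"
    using assms(2,3) by auto
  have lead_iff: "ml_lead (ml_combine m g h) (insert m \<tau>) \<longleftrightarrow>
      ml_lead h \<tau> \<and> (\<forall>\<sigma>. g \<sigma> \<noteq> 0 \<longrightarrow> \<sigma> = \<tau> \<or> set_lex_less \<sigma> \<tau>)"
    if "ml_poly_on E g" "ml_poly_on E h" for g h
  proof -
    have "insert m E \<subseteq> {..m}"
      using assms(2) by auto
    then have "ml_poly_on {..m} (ml_combine m g h)"
      by (rule ml_poly_on_mono[OF ml_poly_on_combine[OF that]])
    then show ?thesis
      using ml_lead_insert_iff_parts[OF \<tau>] ml_parts_combine[OF that m] by simp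
  qed
  show ?thesis
  proof
    assume "insert m \<tau> \<in> ml_lead_sets (insert m E) V"
    then obtain g h where gh: "ml_poly_on E g" "ml_poly_on E h" "ml_vanishes_on (deletion_sets m V) g"
      "ml_vanishes_on (contraction_sets m V) (\<lambda>\<sigma>. g \<sigma> + h \<sigma>)" "ml_lead (ml_combine m g h) (insert m \<tau>)"
      using ml_lead_sets_insert_var_iff[OF assms(1) m] by blast
    then have lead: "ml_lead h \<tau>" "\<forall>\<sigma>. g \<sigma> \<noteq> 0 \<longrightarrow> \<sigma> = \<tau> \<or> set_lex_less \<sigma> \<tau>"
      using lead_iff[OF gh(1,2)] by simp_all
    have "ml_poly_on E (\<lambda>\<sigma>. g \<sigma> + h \<sigma>)"
      using gh(1,2) by (rule ml_poly_on_pointwise) simp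
    then show "\<tau> \<in> ml_lead_sets E (deletion_sets m V) \<or> \<tau> \<in> ml_lead_sets E (contraction_sets m V)"
      using ml_lead_add_cases[OF lead(2,1)] ml_lead_setsI[OF gh(1,3)] ml_lead_setsI[OF _ gh(4)] by blast
  next
    assume "\<tau> \<in> ml_lead_sets E (deletion_sets m V) \<or> \<tau> \<in> ml_lead_sets E (contraction_sets m V)"
    then show "insert m \<tau> \<in> ml_lead_sets (insert m E) V"
    proof (elim disjE ml_lead_setsE)
      fix g0
      assume g0: "ml_poly_on E g0" "ml_vanishes_on (deletion_sets m V) g0" "ml_lead g0 \<tau>"
      have h: "ml_poly_on E (\<lambda>\<sigma>. - g0 \<sigma>)"
        using g0(1) g0(1) by (rule ml_poly_on_pointwise) simp
      have "ml_lead (ml_combine m g0 (\<lambda>\<sigma>. - g0 \<sigma>)) (insert m \<tau>)"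
        using lead_iff[OF g0(1) h] g0(3) by (simp add: ml_lead_def)
      moreover have "ml_vanishes_on (contraction_sets m V) (\<lambda>\<sigma>. g0 \<sigma> + - g0 \<sigma>)"
        by (simp add: ml_vanishes_on_def)
      ultimately show ?thesis
        using ml_lead_sets_insert_var_iff[OF assms(1) m] g0(1,2) h by blast
    next
      fix g1
      assume g1: "ml_poly_on E g1" "ml_vanishes_on (contraction_sets m V) g1" "ml_lead g1 \<tau>"
      have zero: "ml_poly_on E (\<lambda>_. 0)" "ml_vanishes_on (deletion_sets m V) (\<lambda>_. 0)"
        by (simp_all add: ml_poly_on_def ml_vanishes_on_def)
      have "ml_lead (ml_combine m (\<lambda>_. 0) g1) (insert m \<tau>)"
        using lead_iff[OF zero(1) g1(1)] g1(3) by simp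
      moreover have "ml_vanishes_on (contraction_sets m V) (\<lambda>\<sigma>. 0 + g1 \<sigma>)"
        using g1(2) by simp
      ultimately show ?thesis
        using ml_lead_sets_insert_var_iff[OF assms(1) m] zero g1(1) by blast
    qed
  qed
qed

lemma ml_standard_sets_insert:
  assumes "\<forall>B\<in>V. finite B" "E \<subseteq> {..<m}"
  defines "S0 \<equiv> ml_standard_sets E (deletion_sets m V)"
    and "S1 \<equiv> ml_standard_sets E (contraction_sets m V)"
  shows "ml_standard_sets (insert m E) V = S0 \<union> S1 \<union> insert m ` (S0 \<inter> S1)"
proof -
  have m: "m \<notin> E"
    using assms(2) by auto
  have without_m: "\<tau> \<in> ml_standard_sets (insert m E) V \<longleftrightarrow> \<tau> \<in> S0 \<union> S1" if "\<tau> \<subseteq> E" for \<tau>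
    using that ml_lead_sets_iff_parts[OF assms(1,2) that]
    by (auto simp: S0_def S1_def ml_standard_sets_def)
  have with_m: "insert m \<tau> \<in> ml_standard_sets (insert m E) V \<longleftrightarrow> \<tau> \<in> S0 \<inter> S1" if "\<tau> \<subseteq> E" for \<tau>
    using that ml_lead_sets_insert_iff_parts[OF assms(1,2) that]
    by (auto simp: S0_def S1_def ml_standard_sets_def)
  show ?thesis
  proof (intro equalityI subsetI)
    fix \<tau>
    assume \<tau>: "\<tau> \<in> ml_standard_sets (insert m E) V"
    show "\<tau> \<in> S0 \<union> S1 \<union> insert m ` (S0 \<inter> S1)"
    proof (cases "m \<in> \<tau>")
      case False
      then show ?thesis
        using \<tau> without_m[of \<tau>] by (auto simp: ml_standard_sets_def)
    next
      case True
      then have "\<tau> = insert m (\<tau> - {m})" "\<tau> - {m} \<subseteq> E"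
        using \<tau> by (auto simp: ml_standard_sets_def)
      then show ?thesis
        using \<tau> with_m[of "\<tau> - {m}"] by (metis UnI2 image_eqI)
    qed
  next
    fix \<tau>
    assume "\<tau> \<in> S0 \<union> S1 \<union> insert m ` (S0 \<inter> S1)"
    then consider "\<tau> \<in> S0 \<union> S1" | \<tau>' where "\<tau>' \<in> S0 \<inter> S1" "\<tau> = insert m \<tau>'"
      by blast
    moreover have "S0 \<union> S1 \<subseteq> Pow E"
      by (auto simp: S0_def S1_def ml_standard_sets_def)
    ultimately show "\<tau> \<in> ml_standard_sets (insert m E) V"
      using without_m with_m by cases auto
  qed
qed

lemma ml_standard_sets_empty_ground:
  assumes "V \<subseteq> {{}}"
  shows "ml_standard_sets {} V = V"
proof (cases "V = {}")
  case True
  have "ml_lead (\<lambda>\<sigma>. if \<sigma> = {} then 1 else 0) {}" "ml_poly_on {} (\<lambda>\<sigma>. if \<sigma> = {} then 1 else 0)"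
    by (auto simp: ml_lead_def ml_poly_on_def)
  then have "{} \<in> ml_lead_sets {} V"
    using True by (auto simp: ml_vanishes_on_def intro: ml_lead_setsI)
  then show ?thesis
    using True by (auto simp: ml_standard_sets_def)
next
  case False
  then have V: "V = {{}}"
    using assms by auto
  have "{} \<notin> ml_lead_sets {} V"
  proof
    assume "{} \<in> ml_lead_sets {} V"
    then obtain p where "ml_vanishes_on V p" "ml_lead p {}"
      by (rule ml_lead_setsE)
    then show False
      by (simp add: V ml_vanishes_on_def ml_eval_def ml_lead_def)
  qed
  then show ?thesis
    using V by (auto simp: ml_standard_sets_def)
qed

text \<open>Multiplication by \<open>x\<^sub>j\<close>, reduced by \<open>x\<^sub>j\<^sup>2 = x\<^sub>j\<close> (valid at 0/1 points).\<close>

definition ml_times_var :: "nat \<Rightarrow> (nat set \<Rightarrow> real) \<Rightarrow> nat set \<Rightarrow> real" where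
  "ml_times_var j p = (\<lambda>\<rho>. if j \<in> \<rho> then p \<rho> + p (\<rho> - {j}) else 0)"

lemma ml_eval_times_var:
  assumes "finite B"
  shows "ml_eval (ml_times_var j p) B = (if j \<in> B then ml_eval p B else 0)"
proof (cases "j \<in> B")
  case True
  define B' where "B' = B - {j}"
  have B: "B = insert j B'" "j \<notin> B'" "finite B'"
    using True assms by (auto simp: B'_def)
  have "ml_eval (ml_times_var j p) B' = 0"
    using B(2) by (subst ml_eval_cong[where q = "\<lambda>_. 0"]) (auto simp: ml_times_var_def)
  moreover have "ml_eval (\<lambda>\<sigma>. ml_times_var j p (insert j \<sigma>)) B' =
      ml_eval (\<lambda>\<sigma>. p \<sigma> + p (insert j \<sigma>)) B'"
  proof (rule ml_eval_cong)
    fix \<sigma>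
    assume "\<sigma> \<subseteq> B'"
    then have "j \<notin> \<sigma>"
      using B(2) by auto
    then show "ml_times_var j p (insert j \<sigma>) = p \<sigma> + p (insert j \<sigma>)"
      by (simp add: ml_times_var_def)
  qed
  ultimately show ?thesis
    using True ml_eval_insert[OF B(3,2), of "ml_times_var j p"] ml_eval_insert[OF B(3,2), of p]
    by (simp add: B(1) ml_eval_add)
next
  case False
  then show ?thesis
    by (subst ml_eval_cong[where q = "\<lambda>_. 0"]) (auto simp: ml_times_var_def)
qed

lemma ml_lead_sets_insert:
  assumes "\<sigma> \<in> ml_lead_sets E V" "\<forall>B\<in>V. finite B" "j \<in> E"
  shows "insert j \<sigma> \<in> ml_lead_sets E V"
proof (cases "j \<in> \<sigma>")
  case False
  obtain p where p: "ml_poly_on E p" "ml_vanishes_on V p" "ml_lead p \<sigma>"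
    using assms(1) by (rule ml_lead_setsE)
  let ?q = "ml_times_var j p"
  have "ml_poly_on E ?q"
    unfolding ml_poly_on_def
  proof (intro allI impI)
    fix \<rho>
    assume "?q \<rho> \<noteq> 0"
    then have "j \<in> \<rho>" "p \<rho> \<noteq> 0 \<or> p (\<rho> - {j}) \<noteq> 0"
      by (auto simp: ml_times_var_def split: if_splits)
    then show "\<rho> \<subseteq> E"
      using p(1) assms(3) by (auto simp: ml_poly_on_def)
  qed
  moreover have "ml_vanishes_on V ?q"
    using p(2) assms(2) by (simp add: ml_vanishes_on_def ml_eval_times_var)
  moreover have "ml_lead ?q (insert j \<sigma>)"
    unfolding ml_lead_def
  proof (intro conjI allI impI)
    have "p (insert j \<sigma>) = 0"
      using p(3) set_lex_less_insert[OF False] set_lex_less_asym False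
      by (auto simp: ml_lead_def)
    then show "?q (insert j \<sigma>) \<noteq> 0"
      using p(3) False by (simp add: ml_lead_def ml_times_var_def)
  next
    fix \<rho>
    assume "?q \<rho> \<noteq> 0"
    then have j: "j \<in> \<rho>" and "p \<rho> \<noteq> 0 \<or> p (\<rho> - {j}) \<noteq> 0"
      by (auto simp: ml_times_var_def split: if_splits)
    then consider "set_lex_less \<rho> \<sigma>" | "\<rho> - {j} = \<sigma> \<or> set_lex_less (\<rho> - {j}) \<sigma>"
      using p(3) False by (auto simp: ml_lead_def)
    then show "\<rho> = insert j \<sigma> \<or> set_lex_less \<rho> (insert j \<sigma>)"
    proof cases
      case 1
      then show ?thesis
        using set_lex_less_trans set_lex_less_insert[OF False] by blast
    next
      case 2
      then show ?thesis
        using j False set_lex_less_insert_insert_iff[of j "\<rho> - {j}" \<sigma>] by (auto simp: insert_absorb)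
    qed
  qed
  ultimately show ?thesis
    by (rule ml_lead_setsI)
qed (simp add: insert_absorb assms(1))

lemma ml_lead_sets_upward_closed:
  assumes "\<sigma> \<in> ml_lead_sets E V" "\<forall>B\<in>V. finite B" "\<sigma> \<subseteq> \<tau>" "\<tau> \<subseteq> E" "finite \<tau>"
  shows "\<tau> \<in> ml_lead_sets E V"
proof -
  have "\<sigma> \<union> D \<in> ml_lead_sets E V" if "finite D" "D \<subseteq> E" for D
    using that by (induction D rule: finite_induct) (auto intro: ml_lead_sets_insert[OF _ assms(2)] assms(1))
  then have "\<sigma> \<union> (\<tau> - \<sigma>) \<in> ml_lead_sets E V"
    using assms(4,5) by auto
  moreover have "\<sigma> \<union> (\<tau> - \<sigma>) = \<tau>"
    using assms(3) by auto
  ultimately show ?thesis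
    by simp
qed

section \<open>Lex initial ideals of 0/1 point sets\<close>

lemma lex_less_irrefl: "\<not> lex_less \<alpha> \<alpha>"
  by (auto simp: lex_less_def)

lemma lex_less_trans:
  assumes "lex_less \<alpha> \<beta>" "lex_less \<beta> \<gamma>"
  shows "lex_less \<alpha> \<gamma>"
proof -
  obtain i where i: "\<forall>j<i. Poly_Mapping.lookup \<alpha> j = Poly_Mapping.lookup \<beta> j" "Poly_Mapping.lookup \<alpha> i < Poly_Mapping.lookup \<beta> i"
    using assms(1) by (auto simp: lex_less_def)
  obtain i' where i': "\<forall>j<i'. Poly_Mapping.lookup \<beta> j = Poly_Mapping.lookup \<gamma> j" "Poly_Mapping.lookup \<beta> i' < Poly_Mapping.lookup \<gamma> i'"
    using assms(2) by (auto simp: lex_less_def)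
  show ?thesis
    unfolding lex_less_def using i i'
    by (cases "i \<le> i'") (auto simp: le_less intro!: exI[of _ "min i i'"])
qed

lemma lex_less_asym: "lex_less \<alpha> \<beta> \<Longrightarrow> \<not> lex_less \<beta> \<alpha>"
  using lex_less_trans lex_less_irrefl by blast

lemma lex_less_linear:
  assumes "\<alpha> \<noteq> \<beta>"
  shows "lex_less \<alpha> \<beta> \<or> lex_less \<beta> \<alpha>"
proof -
  have "\<exists>i. Poly_Mapping.lookup \<alpha> i \<noteq> Poly_Mapping.lookup \<beta> i"
    using assms by (metis poly_mapping_eqI)
  define i where "i = (LEAST i. Poly_Mapping.lookup \<alpha> i \<noteq> Poly_Mapping.lookup \<beta> i)"
  have "Poly_Mapping.lookup \<alpha> i \<noteq> Poly_Mapping.lookup \<beta> i"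
    unfolding i_def by (rule LeastI_ex) fact
  moreover have "\<forall>j<i. Poly_Mapping.lookup \<alpha> j = Poly_Mapping.lookup \<beta> j"
    unfolding i_def using not_less_Least by blast
  ultimately show ?thesis
    unfolding lex_less_def by (cases "Poly_Mapping.lookup \<alpha> i < Poly_Mapping.lookup \<beta> i") (auto intro!: exI[of _ i])
qed

lemma lex_less_of_le:
  assumes "\<forall>i. Poly_Mapping.lookup \<alpha> i \<le> Poly_Mapping.lookup \<beta> i" "\<alpha> \<noteq> \<beta>"
  shows "lex_less \<alpha> \<beta>"
  using lex_less_linear[OF assms(2)] assms(1) by (auto simp: lex_less_def not_le[symmetric])

lemma lex_less_le_trans:
  assumes "lex_less \<alpha> \<beta>" "\<forall>i. Poly_Mapping.lookup \<beta> i \<le> Poly_Mapping.lookup \<gamma> i"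
  shows "lex_less \<alpha> \<gamma>"
  using assms lex_less_of_le lex_less_trans by metis

lemma lookup_sqfree_mon: "finite \<tau> \<Longrightarrow> Poly_Mapping.lookup (sqfree_mon \<tau>) i = (if i \<in> \<tau> then 1 else 0)"
  by (simp add: sqfree_mon_def lookup_sum lookup_single when_def)

lemma keys_sqfree_mon: "finite \<tau> \<Longrightarrow> Poly_Mapping.keys (sqfree_mon \<tau>) = \<tau>"
  by (auto simp: in_keys_iff lookup_sqfree_mon split: if_splits)

lemma inj_on_sqfree_mon: "finite E \<Longrightarrow> inj_on sqfree_mon (Pow E)"
  by (intro inj_onI) (metis PowD finite_subset keys_sqfree_mon)

lemma lex_less_sqfree_mon_iff:
  assumes "finite \<sigma>" "finite \<tau>"
  shows "lex_less (sqfree_mon \<sigma>) (sqfree_mon \<tau>) \<longleftrightarrow> set_lex_less \<sigma> \<tau>"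
  unfolding lex_less_def set_lex_less_def using assms
  by (simp add: lookup_sqfree_mon) metis

lemma sqfree_mon_keys_le: "Poly_Mapping.lookup (sqfree_mon (Poly_Mapping.keys \<beta>)) i \<le> Poly_Mapping.lookup \<beta> i"
  by (simp add: lookup_sqfree_mon in_keys_iff)

lemma le_sqfree_mon_iff:
  assumes "finite \<tau>"
  shows "(\<forall>i. Poly_Mapping.lookup \<alpha> i \<le> Poly_Mapping.lookup (sqfree_mon \<tau>) i) \<longleftrightarrow>
           \<alpha> = sqfree_mon (Poly_Mapping.keys \<alpha>) \<and> Poly_Mapping.keys \<alpha> \<subseteq> \<tau>"
proof
  assume le: "\<forall>i. Poly_Mapping.lookup \<alpha> i \<le> Poly_Mapping.lookup (sqfree_mon \<tau>) i"
  have "Poly_Mapping.lookup \<alpha> i = (if i \<in> Poly_Mapping.keys \<alpha> then 1 else 0)" for i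
    using le[rule_format, of i] assms by (auto simp: in_keys_iff lookup_sqfree_mon split: if_splits)
  moreover have "Poly_Mapping.keys \<alpha> \<subseteq> \<tau>"
    using le assms by (auto simp: in_keys_iff lookup_sqfree_mon split: if_splits)
  ultimately show "\<alpha> = sqfree_mon (Poly_Mapping.keys \<alpha>) \<and> Poly_Mapping.keys \<alpha> \<subseteq> \<tau>"
    by (auto simp: lookup_sqfree_mon intro!: poly_mapping_eqI)
next
  assume "\<alpha> = sqfree_mon (Poly_Mapping.keys \<alpha>) \<and> Poly_Mapping.keys \<alpha> \<subseteq> \<tau>"
  then show "\<forall>i. Poly_Mapping.lookup \<alpha> i \<le> Poly_Mapping.lookup (sqfree_mon \<tau>) i"
    using assms by (metis lookup_sqfree_mon finite_keys subsetD order_refl zero_le)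
qed

definition is_lex_lead :: "rpoly \<Rightarrow> mon \<Rightarrow> bool" where
  "is_lex_lead f \<alpha> \<longleftrightarrow> \<alpha> \<in> Poly_Mapping.keys f \<and> (\<forall>\<beta>\<in>Poly_Mapping.keys f. \<beta> = \<alpha> \<or> lex_less \<beta> \<alpha>)"

lemma lead_mon_eqI:
  assumes "is_lex_lead f \<alpha>"
  shows "lead_mon f = \<alpha>"
  unfolding lead_mon_def
proof (rule the_equality)
  show "\<alpha> \<in> Poly_Mapping.keys f \<and> (\<forall>\<beta>\<in>Poly_Mapping.keys f. \<beta> = \<alpha> \<or> lex_less \<beta> \<alpha>)"
    using assms by (simp add: is_lex_lead_def)
next
  fix \<alpha>'
  assume "\<alpha>' \<in> Poly_Mapping.keys f \<and> (\<forall>\<beta>\<in>Poly_Mapping.keys f. \<beta> = \<alpha>' \<or> lex_less \<beta> \<alpha>')"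
  then show "\<alpha>' = \<alpha>"
    by (metis assms is_lex_lead_def lex_less_asym)
qed

lemma is_lex_lead_lead_mon:
  assumes "f \<noteq> 0"
  shows "is_lex_lead f (lead_mon f)"
proof -
  have "finite (Poly_Mapping.keys f)" "Poly_Mapping.keys f \<noteq> {}"
    using assms by simp_all
  then have "\<exists>\<alpha>\<in>Poly_Mapping.keys f. \<forall>\<beta>\<in>Poly_Mapping.keys f. \<beta> = \<alpha> \<or> lex_less \<beta> \<alpha>"
  proof (induction rule: finite_ne_induct)
    case (insert \<gamma> F)
    then obtain \<alpha> where \<alpha>: "\<alpha> \<in> F" "\<forall>\<beta>\<in>F. \<beta> = \<alpha> \<or> lex_less \<beta> \<alpha>"
      by blast
    show ?case
    proof (cases "lex_less \<gamma> \<alpha>")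
      case True
      then show ?thesis
        using \<alpha> by (intro bexI[of _ \<alpha>]) auto
    next
      case False
      then have "\<gamma> = \<alpha> \<or> lex_less \<alpha> \<gamma>"
        using lex_less_linear by blast
      then show ?thesis
        using \<alpha> lex_less_trans by (intro bexI[of _ \<gamma>]) auto
    qed
  qed simp
  then show ?thesis
    using lead_mon_eqI by (auto simp: is_lex_lead_def)
qed

lemma peval_char_vec:
  "peval f (char_vec B) = (\<Sum>\<beta>\<in>Poly_Mapping.keys f. if Poly_Mapping.keys \<beta> \<subseteq> B then Poly_Mapping.lookup f \<beta> else 0)"
  unfolding peval_def
proof (rule sum.cong[OF refl])
  fix \<beta>
  have "(\<Prod>i\<in>Poly_Mapping.keys \<beta>. char_vec B i ^ Poly_Mapping.lookup \<beta> i) = (\<Prod>i\<in>Poly_Mapping.keys \<beta>. if i \<in> B then 1 else 0)"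
    by (rule prod.cong) (auto simp: char_vec_def in_keys_iff)
  also have "\<dots> = (if Poly_Mapping.keys \<beta> \<subseteq> B then 1 else 0)"
    by (auto simp: prod.neutral subset_iff intro: prod_zero)
  finally show "Poly_Mapping.lookup f \<beta> * (\<Prod>i\<in>Poly_Mapping.keys \<beta>. char_vec B i ^ Poly_Mapping.lookup \<beta> i) =
      (if Poly_Mapping.keys \<beta> \<subseteq> B then Poly_Mapping.lookup f \<beta> else 0)"
    by simp
qed

definition ml_to_poly :: "nat set \<Rightarrow> (nat set \<Rightarrow> real) \<Rightarrow> rpoly" where
  "ml_to_poly E p = (\<Sum>\<sigma>\<in>Pow E. Poly_Mapping.single (sqfree_mon \<sigma>) (p \<sigma>))"

lemma lookup_ml_to_poly:
  "Poly_Mapping.lookup (ml_to_poly E p) \<alpha> = (\<Sum>\<sigma>\<in>Pow E. if sqfree_mon \<sigma> = \<alpha> then p \<sigma> else 0)"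
  by (simp add: ml_to_poly_def lookup_sum lookup_single when_def)

lemma lookup_ml_to_poly_sqfree_mon:
  assumes "finite E" "\<sigma> \<subseteq> E"
  shows "Poly_Mapping.lookup (ml_to_poly E p) (sqfree_mon \<sigma>) = p \<sigma>"
proof -
  have "(\<Sum>\<sigma>'\<in>Pow E. if sqfree_mon \<sigma>' = sqfree_mon \<sigma> then p \<sigma>' else 0) =
      (\<Sum>\<sigma>'\<in>Pow E. if \<sigma>' = \<sigma> then p \<sigma>' else 0)"
    using inj_on_sqfree_mon[OF assms(1)] assms(2) by (intro sum.cong) (auto dest: inj_onD)
  then show ?thesis
    using assms by (simp add: lookup_ml_to_poly)
qed

lemma keys_ml_to_poly: "Poly_Mapping.keys (ml_to_poly E p) \<subseteq> sqfree_mon ` Pow E"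
proof
  fix \<alpha>
  assume \<alpha>: "\<alpha> \<in> Poly_Mapping.keys (ml_to_poly E p)"
  show "\<alpha> \<in> sqfree_mon ` Pow E"
  proof (rule ccontr)
    assume "\<alpha> \<notin> sqfree_mon ` Pow E"
    then have "Poly_Mapping.lookup (ml_to_poly E p) \<alpha> = 0"
      by (auto simp: lookup_ml_to_poly intro!: sum.neutral)
    then show False
      using \<alpha> by (simp add: in_keys_iff)
  qed
qed

lemma ml_to_poly_in_poly_in:
  assumes "finite E"
  shows "ml_to_poly E p \<in> poly_in E"
  unfolding poly_in_def
proof (intro CollectI ballI)
  fix \<alpha>
  assume "\<alpha> \<in> Poly_Mapping.keys (ml_to_poly E p)"
  then obtain \<sigma> where "\<sigma> \<subseteq> E" "\<alpha> = sqfree_mon \<sigma>"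
    using keys_ml_to_poly by blast
  then show "Poly_Mapping.keys \<alpha> \<subseteq> E"
    using assms by (simp add: keys_sqfree_mon finite_subset)
qed

lemma peval_ml_to_poly:
  assumes "finite E" "B \<subseteq> E" "ml_poly_on E p"
  shows "peval (ml_to_poly E p) (char_vec B) = ml_eval p B"
proof -
  let ?f = "ml_to_poly E p"
  let ?g = "\<lambda>\<beta>. if Poly_Mapping.keys \<beta> \<subseteq> B then Poly_Mapping.lookup ?f \<beta> else 0"
  have "peval ?f (char_vec B) = (\<Sum>\<beta>\<in>sqfree_mon ` Pow E. ?g \<beta>)"
    unfolding peval_char_vec
    using assms(1) keys_ml_to_poly by (intro sum.mono_neutral_left) (auto simp: in_keys_iff)
  also have "\<dots> = (\<Sum>\<sigma>\<in>Pow E. ?g (sqfree_mon \<sigma>))"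
    by (rule sum.reindex[OF inj_on_sqfree_mon[OF assms(1)], unfolded comp_def])
  also have "\<dots> = (\<Sum>\<sigma>\<in>Pow E. if \<sigma> \<subseteq> B then p \<sigma> else 0)"
    using assms(1) by (intro sum.cong) (auto simp: keys_sqfree_mon lookup_ml_to_poly_sqfree_mon finite_subset)
  also have "\<dots> = (\<Sum>\<sigma>\<in>Pow E \<inter> {\<sigma>. \<sigma> \<subseteq> B}. p \<sigma>)"
    using assms(1) by (simp add: sum.inter_restrict)
  also have "Pow E \<inter> {\<sigma>. \<sigma> \<subseteq> B} = Pow B"
    using assms(2) by auto
  finally show ?thesis
    by (simp add: ml_eval_def)
qed

lemma ml_lead_sets_imp_init_ideal:
  assumes "finite E" "Bs \<subseteq> Pow E" "\<tau> \<in> ml_lead_sets E Bs"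
  shows "monom (sqfree_mon \<tau>) \<in> init_ideal_lex E (vanishing_ideal E (char_vec ` Bs))"
proof -
  obtain p where p: "ml_poly_on E p" "ml_vanishes_on Bs p" "ml_lead p \<tau>"
    using assms(3) by (rule ml_lead_setsE)
  have \<tau>: "\<tau> \<subseteq> E"
    using assms(3) by (rule ml_lead_sets_subset)
  let ?f = "ml_to_poly E p"
  have f: "?f \<in> vanishing_ideal E (char_vec ` Bs)"
    using assms(1,2) p(1,2) ml_to_poly_in_poly_in
    by (auto simp: vanishing_ideal_def ml_vanishes_on_def peval_ml_to_poly)
  have lead: "Poly_Mapping.lookup ?f (sqfree_mon \<tau>) \<noteq> 0"
    using p(3) lookup_ml_to_poly_sqfree_mon[OF assms(1) \<tau>] by (simp add: ml_lead_def)
  have "is_lex_lead ?f (sqfree_mon \<tau>)"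
    unfolding is_lex_lead_def
  proof (intro conjI ballI)
    show "sqfree_mon \<tau> \<in> Poly_Mapping.keys ?f"
      using lead by (simp add: in_keys_iff)
  next
    fix \<beta>
    assume \<beta>: "\<beta> \<in> Poly_Mapping.keys ?f"
    obtain \<sigma> where \<sigma>: "\<sigma> \<subseteq> E" "\<beta> = sqfree_mon \<sigma>"
      using keys_ml_to_poly \<beta> by blast
    then have "p \<sigma> \<noteq> 0"
      using \<beta> lookup_ml_to_poly_sqfree_mon[OF assms(1)] by (simp add: in_keys_iff)
    then have "\<sigma> = \<tau> \<or> set_lex_less \<sigma> \<tau>"
      using p(3) by (simp add: ml_lead_def)
    moreover have "finite \<sigma>" "finite \<tau>"
      using \<sigma>(1) \<tau> assms(1) by (meson finite_subset)+
    ultimately show "\<beta> = sqfree_mon \<tau> \<or> lex_less \<beta> (sqfree_mon \<tau>)"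
      using \<sigma>(2) lex_less_sqfree_mon_iff by auto
  qed
  then have "lead_mon ?f = sqfree_mon \<tau>" "?f \<noteq> 0"
    using lead by (auto simp: lead_mon_eqI)
  then have "monom (sqfree_mon \<tau>) \<in> {monom (lead_mon f) |f. f \<in> vanishing_ideal E (char_vec ` Bs) \<and> f \<noteq> 0}"
    using f by (intro CollectI exI[of _ ?f]) simp
  from ideal_gen.add[OF this _ ideal_gen.zero, of 1]
  show ?thesis
    by (simp add: init_ideal_lex_def poly_in_def)
qed

lemma init_ideal_lex_keys:
  assumes "q \<in> ideal_gen E {monom (lead_mon f) |f. f \<in> I \<and> f \<noteq> 0}" "\<beta> \<in> Poly_Mapping.keys q"
  shows "\<exists>f\<in>I. f \<noteq> 0 \<and> (\<forall>i. Poly_Mapping.lookup (lead_mon f) i \<le> Poly_Mapping.lookup \<beta> i)"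
  using assms
proof (induction arbitrary: \<beta> rule: ideal_gen.induct)
  case (add g h p)
  obtain f where f: "f \<in> I" "f \<noteq> 0" "g = monom (lead_mon f)"
    using add.hyps(1) by blast
  have "\<beta> \<in> Poly_Mapping.keys (h * g) \<union> Poly_Mapping.keys p"
    using add.prems by (rule subsetD[OF keys_add])
  then show ?case
  proof
    assume "\<beta> \<in> Poly_Mapping.keys (h * g)"
    then obtain a b where ab: "\<beta> = a + b" "b \<in> Poly_Mapping.keys g"
      using keys_mult by blast
    then have "b = lead_mon f"
      using f(3) by (simp add: monom_def)
    then show ?thesis
      using f(1,2) ab(1) by (auto simp: lookup_add)
  next
    assume "\<beta> \<in> Poly_Mapping.keys p"
    then show ?thesis
      by (rule add.IH)
  qed
qed simp

text \<open>At 0/1 points a monomial only depends on its support, so this keeps all values.\<close>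

definition multilinearize :: "rpoly \<Rightarrow> nat set \<Rightarrow> real" where
  "multilinearize f \<sigma> =
     (\<Sum>\<beta>\<in>{\<beta> \<in> Poly_Mapping.keys f. Poly_Mapping.keys \<beta> = \<sigma>}. Poly_Mapping.lookup f \<beta>)"

lemma multilinearize_nonzero:
  assumes "multilinearize f \<sigma> \<noteq> 0"
  shows "\<exists>\<beta>\<in>Poly_Mapping.keys f. Poly_Mapping.keys \<beta> = \<sigma>"
proof (rule ccontr)
  assume "\<not> (\<exists>\<beta>\<in>Poly_Mapping.keys f. Poly_Mapping.keys \<beta> = \<sigma>)"
  then have "{\<beta> \<in> Poly_Mapping.keys f. Poly_Mapping.keys \<beta> = \<sigma>} = {}"
    by auto
  then show False
    using assms unfolding multilinearize_def by (metis sum.empty)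
qed

lemma ml_poly_on_multilinearize: "f \<in> poly_in E \<Longrightarrow> ml_poly_on E (multilinearize f)"
  unfolding ml_poly_on_def poly_in_def using multilinearize_nonzero by blast

lemma ml_eval_multilinearize:
  assumes "finite B"
  shows "ml_eval (multilinearize f) B = peval f (char_vec B)"
proof -
  let ?S = "{\<beta> \<in> Poly_Mapping.keys f. Poly_Mapping.keys \<beta> \<subseteq> B}"
  have "ml_eval (multilinearize f) B =
      (\<Sum>\<sigma>\<in>Pow B. \<Sum>\<beta>\<in>{\<beta> \<in> ?S. Poly_Mapping.keys \<beta> = \<sigma>}. Poly_Mapping.lookup f \<beta>)"
    unfolding ml_eval_def multilinearize_def by (intro sum.cong refl) auto
  also have "\<dots> = (\<Sum>\<beta>\<in>?S. Poly_Mapping.lookup f \<beta>)"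
    using assms by (intro sum.group) auto
  also have "\<dots> = peval f (char_vec B)"
    unfolding peval_char_vec by (simp add: sum.inter_filter)
  finally show ?thesis .
qed

lemma ml_lead_multilinearize:
  assumes "f \<noteq> 0" "lead_mon f = sqfree_mon \<sigma>" "finite \<sigma>"
  shows "ml_lead (multilinearize f) \<sigma>"
proof -
  let ?\<alpha> = "sqfree_mon \<sigma>"
  have lead: "?\<alpha> \<in> Poly_Mapping.keys f" "\<forall>\<beta>\<in>Poly_Mapping.keys f. \<beta> = ?\<alpha> \<or> lex_less \<beta> ?\<alpha>"
    using is_lex_lead_lead_mon[OF assms(1)] assms(2) by (simp_all add: is_lex_lead_def)
  have above: "\<beta> = ?\<alpha>" if "\<beta> \<in> Poly_Mapping.keys f" "set_lex_less \<sigma> (Poly_Mapping.keys \<beta>) \<or> Poly_Mapping.keys \<beta> = \<sigma>" for \<beta>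
  proof (rule ccontr)
    assume "\<beta> \<noteq> ?\<alpha>"
    have "lex_less ?\<alpha> (sqfree_mon (Poly_Mapping.keys \<beta>)) \<or> ?\<alpha> = sqfree_mon (Poly_Mapping.keys \<beta>)"
      using that(2) lex_less_sqfree_mon_iff[OF assms(3) finite_keys] by blast
    moreover have "\<forall>i. Poly_Mapping.lookup (sqfree_mon (Poly_Mapping.keys \<beta>)) i \<le> Poly_Mapping.lookup \<beta> i"
      by (simp add: sqfree_mon_keys_le)
    ultimately have "lex_less ?\<alpha> \<beta>"
      using \<open>\<beta> \<noteq> ?\<alpha>\<close> lex_less_le_trans lex_less_of_le by metis
    then show False
      using lead(2) that(1) \<open>\<beta> \<noteq> ?\<alpha>\<close> lex_less_asym by blast
  qed
  have "{\<beta> \<in> Poly_Mapping.keys f. Poly_Mapping.keys \<beta> = \<sigma>} = {?\<alpha>}"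
  proof (intro equalityI subsetI)
    fix \<beta>
    assume "\<beta> \<in> {\<beta> \<in> Poly_Mapping.keys f. Poly_Mapping.keys \<beta> = \<sigma>}"
    then show "\<beta> \<in> {?\<alpha>}"
      using above[of \<beta>] by simp
  qed (use lead(1) keys_sqfree_mon[OF assms(3)] in simp)
  then have "multilinearize f \<sigma> \<noteq> 0"
    using lead(1) by (simp add: multilinearize_def in_keys_iff)
  moreover have "\<sigma>' = \<sigma> \<or> set_lex_less \<sigma>' \<sigma>" if nonzero: "multilinearize f \<sigma>' \<noteq> 0" for \<sigma>'
  proof (rule ccontr)
    assume "\<not> (\<sigma>' = \<sigma> \<or> set_lex_less \<sigma>' \<sigma>)"
    then have "set_lex_less \<sigma> \<sigma>'" "\<sigma>' \<noteq> \<sigma>"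
      using set_lex_less_linear by blast+
    moreover obtain \<beta> where "\<beta> \<in> Poly_Mapping.keys f" "Poly_Mapping.keys \<beta> = \<sigma>'"
      using multilinearize_nonzero[OF nonzero] by blast
    ultimately show False
      using above assms(3) keys_sqfree_mon by metis
  qed
  ultimately show ?thesis
    by (simp add: ml_lead_def)
qed

lemma init_ideal_imp_ml_lead_sets:
  assumes "finite E" "Bs \<subseteq> Pow E" "\<tau> \<subseteq> E"
    and "monom (sqfree_mon \<tau>) \<in> init_ideal_lex E (vanishing_ideal E (char_vec ` Bs))"
  shows "\<tau> \<in> ml_lead_sets E Bs"
proof -
  have fin: "finite \<tau>" "\<forall>B\<in>Bs. finite B"
    using assms(1-3) by (meson PowD finite_subset subsetD)+
  have "sqfree_mon \<tau> \<in> Poly_Mapping.keys (monom (sqfree_mon \<tau>))"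
    by (simp add: monom_def)
  moreover have "monom (sqfree_mon \<tau>) \<in>
      ideal_gen E {monom (lead_mon f) |f. f \<in> vanishing_ideal E (char_vec ` Bs) \<and> f \<noteq> 0}"
    using assms(4) by (simp add: init_ideal_lex_def)
  ultimately obtain f where f: "f \<in> vanishing_ideal E (char_vec ` Bs)" "f \<noteq> 0"
    and le: "\<forall>i. Poly_Mapping.lookup (lead_mon f) i \<le> Poly_Mapping.lookup (sqfree_mon \<tau>) i"
    using init_ideal_lex_keys by blast
  define \<sigma> where "\<sigma> = Poly_Mapping.keys (lead_mon f)"
  have \<sigma>: "lead_mon f = sqfree_mon \<sigma>" "\<sigma> \<subseteq> \<tau>"
    using le le_sqfree_mon_iff[OF fin(1), of "lead_mon f"] by (simp_all add: \<sigma>_def)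
  have "\<sigma> \<in> ml_lead_sets E Bs"
  proof (rule ml_lead_setsI)
    show "ml_poly_on E (multilinearize f)"
      using f(1) by (simp add: vanishing_ideal_def ml_poly_on_multilinearize)
    show "ml_vanishes_on Bs (multilinearize f)"
      using f(1) fin(2) by (simp add: ml_vanishes_on_def vanishing_ideal_def ml_eval_multilinearize)
    show "ml_lead (multilinearize f) \<sigma>"
      using f(2) \<sigma> fin(1) finite_subset by (blast intro: ml_lead_multilinearize)
  qed
  then show ?thesis
    by (rule ml_lead_sets_upward_closed[OF _ fin(2) \<sigma>(2) assms(3) fin(1)])
qed

lemma S_lex_eq_ml_standard_sets:
  assumes "finite E" "Bs \<subseteq> Pow E" "Bs \<noteq> {}"
  shows "S_lex E Bs = ml_standard_sets E Bs"
proof (cases "E = {}")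
  case True
  then have "Bs = {{}}"
    using assms(2,3) by auto
  then show ?thesis
    using True ml_standard_sets_empty_ground[of Bs] by (simp add: S_lex_def)
next
  case False
  then show ?thesis
    using ml_lead_sets_imp_init_ideal[OF assms(1,2)] init_ideal_imp_ml_lead_sets[OF assms(1,2)]
    by (auto simp: S_lex_def ml_standard_sets_def)
qed

section \<open>Standard sets of the lattice path matroid\<close>

lemma deletion_sets_Epos_paths_below:
  "deletion_sets (Suc n) (Epos ` paths_below (Suc n) d u) = Epos ` prefixes_N n d u"
proof (intro equalityI subsetI)
  fix B
  assume "B \<in> deletion_sets (Suc n) (Epos ` paths_below (Suc n) d u)"
  then obtain C where C: "C \<in> paths_below (Suc n) d u" "B = Epos C" "Suc n \<notin> B"
    by (auto simp: deletion_sets_def)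
  from C(1) show "B \<in> Epos ` prefixes_N n d u"
  proof (cases rule: paths_below_SucE)
    case (E C')
    then show ?thesis
      using C(2,3) paths_belowD(1)[of C'] by simp
  qed (use C(2) in simp)
next
  fix B
  assume "B \<in> Epos ` prefixes_N n d u"
  then obtain C where C: "C \<in> prefixes_N n d u" "B = Epos C"
    by auto
  then have "Suc n \<notin> B"
    using Epos_subset[of C] paths_belowD(1)[OF C(1)] by auto
  moreover have "C @ [StN] \<in> paths_below (Suc n) d u"
    using C(1) by (simp add: snoc_N_mem_paths_below_iff)
  then have "B \<in> Epos ` paths_below (Suc n) d u"
    using C(2) by (metis Epos_snoc_N image_eqI)
  ultimately show "B \<in> deletion_sets (Suc n) (Epos ` paths_below (Suc n) d u)"
    by (simp add: deletion_sets_def)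
qed

lemma contraction_sets_Epos_paths_below:
  "contraction_sets (Suc n) (Epos ` paths_below (Suc n) d u) = Epos ` prefixes_E n d u"
proof (intro equalityI subsetI)
  fix B
  assume "B \<in> contraction_sets (Suc n) (Epos ` paths_below (Suc n) d u)"
  then obtain C where C: "C \<in> paths_below (Suc n) d u" "B = Epos C - {Suc n}" "Suc n \<in> Epos C"
    by (auto simp: contraction_sets_def)
  from C(1) show "B \<in> Epos ` prefixes_E n d u"
  proof (cases rule: paths_below_SucE)
    case (N C')
    then show ?thesis
      using C(3) Epos_subset[of C'] paths_belowD(1)[of C'] by auto
  next
    case (E C')
    then have "Suc n \<notin> Epos C'"
      using Epos_subset[of C'] paths_belowD(1)[of C'] by auto
    then show ?thesis
      using C(2) E paths_belowD(1)[of C'] by simp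
  qed
next
  fix B
  assume "B \<in> Epos ` prefixes_E n d u"
  then obtain C where C: "C \<in> prefixes_E n d u" "B = Epos C"
    by auto
  then have "Suc n \<notin> B"
    using Epos_subset[of C] paths_belowD(1)[OF C(1)] by auto
  have "C @ [StE] \<in> paths_below (Suc n) d u" "Epos (C @ [StE]) = insert (Suc n) B"
    using C prefixes_E_snoc[OF C(1)] by simp_all
  then have "insert (Suc n) B \<in> {B \<in> Epos ` paths_below (Suc n) d u. Suc n \<in> B}"
    by (metis (mono_tags, lifting) image_eqI insertI1 mem_Collect_eq)
  moreover have "B = insert (Suc n) B - {Suc n}"
    using \<open>Suc n \<notin> B\<close> by simp
  ultimately show "B \<in> contraction_sets (Suc n) (Epos ` paths_below (Suc n) d u)"
    unfolding contraction_sets_def by (rule image_eqI[rotated])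
qed

lemma ml_standard_sets_paths_below:
  "ml_standard_sets {1..n} (Epos ` paths_below n d u) = st_Ltr ` paths_below n d u"
proof (induction n arbitrary: d u)
  case 0
  have "paths_below 0 d u \<subseteq> {[]}"
    using paths_belowD(1) by fastforce
  then have "Epos ` paths_below 0 d u \<subseteq> {{}}" "\<forall>C\<in>paths_below 0 d u. Epos C = st_Ltr C"
    by (auto simp: Epos_def st_Ltr_def)
  then show ?case
    using ml_standard_sets_empty_ground by simp
next
  case (Suc n)
  have "\<forall>B\<in>Epos ` paths_below (Suc n) d u. finite B"
    by (simp add: finite_subset[OF Epos_subset])
  moreover have "{1..n} \<subseteq> {..<Suc n}"
    by auto
  ultimately have "ml_standard_sets (insert (Suc n) {1..n}) (Epos ` paths_below (Suc n) d u) =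
      st_Ltr ` prefixes_N n d u \<union> st_Ltr ` prefixes_E n d u \<union>
      insert (Suc n) ` (st_Ltr ` prefixes_N n d u \<inter> st_Ltr ` prefixes_E n d u)"
    by (subst ml_standard_sets_insert)
      (simp_all only: deletion_sets_Epos_paths_below contraction_sets_Epos_paths_below Suc.IH)
  also have "\<dots> = st_Ltr ` paths_below (Suc n) d u"
    by (rule st_Ltr_image_paths_below_Suc[symmetric])
  also have "insert (Suc n) {1..n} = {1..Suc n}"
    by auto
  finally show ?case .
qed

lemma S_lex_paths_below:
  assumes "paths_below n d u \<noteq> {}"
  shows "S_lex {1..n} (Epos ` paths_below n d u) = st_Ltr ` paths_below n d u"
proof -
  have "Epos ` paths_below n d u \<subseteq> Pow {1..n}"
    by (auto simp: Epos_paths_below)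
  then show ?thesis
    using assms S_lex_eq_ml_standard_sets[of "{1..n}" "Epos ` paths_below n d u"]
      ml_standard_sets_paths_below[of n d u] by simp
qed

section \<open>The bijection Lambda\<close>

lemma bij_betw_split_value:
  assumes bij: "bij_betw L V (X0 \<union> X1 \<union> insert m ` (X0 \<inter> X1))"
    and m: "\<forall>\<tau>\<in>X0 \<union> X1. m \<notin> \<tau>"
    and B: "B \<in> V" "m \<in> B" "L B - {m} = \<rho>" "\<rho> \<in> X1"
    and taken: "\<rho> \<in> X0 \<Longrightarrow> \<exists>B0\<in>V. m \<notin> B0 \<and> L B0 = \<rho>"
  shows "L B = (if \<rho> \<in> X0 then insert m \<rho> else \<rho>)"
proof -
  have "m \<notin> \<rho>"
    using m B(4) by blast
  have cases: "L B = \<rho> \<or> L B = insert m \<rho>"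
    using B(3) by (metis Diff_empty Diff_insert0 insert_Diff)
  show ?thesis
  proof (cases "\<rho> \<in> X0")
    case True
    then obtain B0 where "B0 \<in> V" "m \<notin> B0" "L B0 = \<rho>"
      using taken by blast
    then have "L B \<noteq> \<rho>"
      using bij B(1,2) by (metis bij_betw_def inj_onD)
    then show ?thesis
      using cases True by simp
  next
    case False
    have "insert m \<rho> \<notin> insert m ` (X0 \<inter> X1)"
    proof
      assume "insert m \<rho> \<in> insert m ` (X0 \<inter> X1)"
      then obtain \<tau> where \<tau>: "\<tau> \<in> X0 \<inter> X1" "insert m \<rho> = insert m \<tau>"
        by blast
      then have "\<tau> = \<rho>"
        using m \<open>m \<notin> \<rho>\<close> by (metis Int_iff UnI1 insert_ident)
      then show False
        using False \<tau>(1) by blast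
    qed
    moreover have "insert m \<rho> \<notin> X0 \<union> X1"
      using m by (metis insertI1)
    moreover have "L B \<in> X0 \<union> X1 \<union> insert m ` (X0 \<inter> X1)"
      using bij B(1) by (rule bij_betw_apply)
    ultimately have "L B \<noteq> insert m \<rho>"
      by (metis Un_iff)
    then show ?thesis
      using cases False by simp
  qed
qed

lemma del_bases_eq_deletion_sets:
  assumes "B \<in> Bs" "m \<notin> B"
  shows "del_bases Bs m = deletion_sets m Bs"
proof -
  have "\<exists>B\<in>Bs. m \<notin> B"
    using assms by blast
  then show ?thesis
    by (simp add: del_bases_def deletion_sets_def)
qed

lemma con_bases_eq_contraction_sets:
  assumes "B \<in> Bs" "m \<in> B"
  shows "con_bases Bs m = contraction_sets m Bs"
proof -
  have "\<exists>B\<in>Bs. m \<in> B"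
    using assms by blast
  then show ?thesis
    by (simp add: con_bases_def contraction_sets_def)
qed

lemma is_Lambda_familyD:
  assumes "is_Lambda_family Lam" "matroid E Bs"
  shows "bij_betw (Lam E Bs) Bs (S_lex E Bs)"
    and "E \<noteq> {} \<Longrightarrow> B \<in> Bs \<Longrightarrow> Max E \<notin> B \<Longrightarrow>
           Lam E Bs B = Lam (E - {Max E}) (del_bases Bs (Max E)) B"
    and "E \<noteq> {} \<Longrightarrow> B \<in> Bs \<Longrightarrow> Max E \<in> B \<Longrightarrow>
           Lam E Bs B - {Max E} = Lam (E - {Max E}) (con_bases Bs (Max E)) (B - {Max E})"
  using assms(1)[unfolded is_Lambda_family_def, THEN spec, THEN spec, THEN mp, OF assms(2)]
  by auto

lemma Lambda_empty_ground:
  assumes "is_Lambda_family Lam" "matroid {} Bs" "B \<in> Bs"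
  shows "Lam {} Bs B = {}"
  using bij_betw_apply[OF is_Lambda_familyD(1)[OF assms(1,2)] assms(3)] by (simp add: S_lex_def)

lemma Lambda_paths_below_Suc:
  assumes Lam: "is_Lambda_family Lam" and C: "C \<in> paths_below (Suc n) d u"
  shows "bij_betw (Lam {1..Suc n} (Epos ` paths_below (Suc n) d u)) (Epos ` paths_below (Suc n) d u)
           (st_Ltr ` prefixes_N n d u \<union> st_Ltr ` prefixes_E n d u \<union>
            insert (Suc n) ` (st_Ltr ` prefixes_N n d u \<inter> st_Ltr ` prefixes_E n d u))"
    and "C = C' @ [StN] \<Longrightarrow> C' \<in> prefixes_N n d u \<Longrightarrow>
           Lam {1..Suc n} (Epos ` paths_below (Suc n) d u) (Epos C) =
             Lam {1..n} (Epos ` prefixes_N n d u) (Epos C')"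
    and "C = C' @ [StE] \<Longrightarrow> C' \<in> prefixes_E n d u \<Longrightarrow>
           Lam {1..Suc n} (Epos ` paths_below (Suc n) d u) (Epos C) - {Suc n} =
             Lam {1..n} (Epos ` prefixes_E n d u) (Epos C')"
proof -
  let ?V = "Epos ` paths_below (Suc n) d u"
  have mat: "matroid {1..Suc n} ?V"
    using C by (intro matroid_Epos_paths_below) auto
  have "S_lex {1..Suc n} ?V = st_Ltr ` paths_below (Suc n) d u"
    using C by (intro S_lex_paths_below) blast
  then show "bij_betw (Lam {1..Suc n} ?V) ?V
      (st_Ltr ` prefixes_N n d u \<union> st_Ltr ` prefixes_E n d u \<union>
       insert (Suc n) ` (st_Ltr ` prefixes_N n d u \<inter> st_Ltr ` prefixes_E n d u))"
    using is_Lambda_familyD(1)[OF Lam mat] by (simp add: st_Ltr_image_paths_below_Suc)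
  have max: "Max {1..Suc n} = Suc n"
    by (rule Max_eqI) auto
  have rest: "{1..Suc n} - {Suc n} = {1..n}"
    by auto
  have B: "Epos C \<in> ?V"
    using C by blast
  show "Lam {1..Suc n} ?V (Epos C) = Lam {1..n} (Epos ` prefixes_N n d u) (Epos C')"
    if "C = C' @ [StN]" "C' \<in> prefixes_N n d u"
  proof -
    have "Suc n \<notin> Epos C"
      using that Epos_subset[of C'] paths_belowD(1)[OF that(2)] by auto
    then show ?thesis
      using is_Lambda_familyD(2)[OF Lam mat _ B, unfolded max rest] del_bases_eq_deletion_sets[OF B]
        deletion_sets_Epos_paths_below that(1)
      by simp
  qed
  show "Lam {1..Suc n} ?V (Epos C) - {Suc n} = Lam {1..n} (Epos ` prefixes_E n d u) (Epos C')"
    if "C = C' @ [StE]" "C' \<in> prefixes_E n d u"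
  proof -
    have "Suc n \<notin> Epos C'" "Epos C = insert (Suc n) (Epos C')"
      using that Epos_subset[of C'] paths_belowD(1)[OF that(2)] by auto
    then show ?thesis
      using is_Lambda_familyD(3)[OF Lam mat _ B, unfolded max rest] con_bases_eq_contraction_sets[OF B]
        contraction_sets_Epos_paths_below
      by simp
  qed
qed

lemma Lambda_paths_below:
  assumes "is_Lambda_family Lam" "C \<in> paths_below n d u"
  shows "Lam {1..n} (Epos ` paths_below n d u) (Epos C) = st_Ltr C"
  using assms(2)
proof (induction n arbitrary: d u C)
  case 0
  then have "C = []" "matroid {} (Epos ` paths_below 0 d u)"
    using paths_belowD(1) matroid_Epos_paths_below[of 0 d u] by auto
  then show ?case
    using Lambda_empty_ground[OF assms(1)] 0 by (simp add: st_Ltr_def)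
next
  case (Suc n)
  let ?V = "Epos ` paths_below (Suc n) d u"
  let ?X0 = "st_Ltr ` prefixes_N n d u" and ?X1 = "st_Ltr ` prefixes_E n d u"
  have N_case: "Lam {1..Suc n} ?V (Epos (C0 @ [StN])) = st_Ltr C0" if C0: "C0 \<in> prefixes_N n d u" for C0
  proof -
    have "C0 @ [StN] \<in> paths_below (Suc n) d u"
      using C0 by (simp add: snoc_N_mem_paths_below_iff)
    then show ?thesis
      using Lambda_paths_below_Suc(2)[OF assms(1) _ refl C0] Suc.IH[OF C0] by simp
  qed
  from Suc.prems show ?case
  proof (cases rule: paths_below_SucE)
    case (N C')
    then show ?thesis
      using N_case by simp
  next
    case (E C')
    have "\<forall>\<tau>\<in>?X0 \<union> ?X1. Suc n \<notin> \<tau>"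
      using st_Ltr_subset paths_belowD(1) by fastforce
    moreover have "Epos C \<in> ?V"
      using Suc.prems by (rule imageI)
    moreover have "Suc n \<in> Epos C"
      using E paths_belowD(1)[OF E(2)] by simp
    moreover have "Lam {1..Suc n} ?V (Epos C) - {Suc n} = st_Ltr C'"
      using Lambda_paths_below_Suc(3)[OF assms(1) Suc.prems E] Suc.IH[OF E(2)] by simp
    moreover have "\<exists>B0\<in>?V. Suc n \<notin> B0 \<and> Lam {1..Suc n} ?V B0 = st_Ltr C'" if X0: "st_Ltr C' \<in> ?X0"
    proof -
      obtain C0 where C0: "C0 \<in> prefixes_N n d u" "st_Ltr C0 = st_Ltr C'"
        using X0 by auto
      have "C0 @ [StN] \<in> paths_below (Suc n) d u"
        using C0(1) by (simp add: snoc_N_mem_paths_below_iff)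
      then have "Epos (C0 @ [StN]) \<in> ?V"
        by (rule imageI)
      moreover have "Suc n \<notin> Epos (C0 @ [StN])"
        using Epos_subset[of C0] paths_belowD(1)[OF C0(1)] by auto
      ultimately show ?thesis
        using N_case[OF C0(1)] C0(2) by metis
    qed
    ultimately have "Lam {1..Suc n} ?V (Epos C) =
        (if st_Ltr C' \<in> ?X0 then insert (Suc n) (st_Ltr C') else st_Ltr C')"
      using E(2) by (intro bij_betw_split_value[OF Lambda_paths_below_Suc(1)[OF assms(1) Suc.prems]]) auto
    then show ?thesis
      using st_Ltr_snoc_E_prefixes_E[OF E(2)] E(1) by simp
  qed
qed

theorem theorem4p4:
  fixes n d :: nat and U :: "step list"
  assumes "U \<in> paths n d"
  shows "(\<forall>Lam. is_Lambda_family Lam \<longrightarrow>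
            (\<forall>C\<in>paths_between n d U (Ltr n d).
               st_Ltr C = Lam {1..n} (lattice_path_matroid_bases n d U (Ltr n d)) (Epos C)))
       \<and> S_lex {1..n} (lattice_path_matroid_bases n d U (Ltr n d))
           = st_Ltr ` paths_between n d U (Ltr n d)"
proof -
  let ?F = "paths_below n d (\<lambda>k. num_e (take k U))"
  have F: "paths_between n d U (Ltr n d) = ?F"
    by (rule paths_between_Ltr[OF assms])
  moreover have "lattice_path_matroid_bases n d U (Ltr n d) = Epos ` ?F"
    by (simp add: lattice_path_matroid_bases_def F)
  moreover have "U \<in> ?F"
    using assms by (simp add: mem_paths_below_iff paths_def num_e_def)
  ultimately show ?thesis
    using Lambda_paths_below S_lex_paths_below[of n d] by (metis empty_iff)
qed

end
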